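(* Let $\phi\in\mathcal S_d$ with $\sup_\xi|\widehat\phi(\xi)|=1$ and $\xi_0\in\Omega(\phi)$. Suppose there exist $\mathbf m=(m_1,\dots,m_d)\in\mathbb{N}_+^d$ and $k\ge1$ such that on a neighborhood $\mathcal U$ of $0$, $\Gamma_{\xi_0}(\xi)=i\alpha\cdot\xi-i\Big(\sum_{|\beta:2\mathbf m|\ge1}A_\beta\xi^\beta\Big)-\sum_{|\beta:2\mathbf m|\ge k}B_\beta\xi^\beta=i\alpha\cdot\xi-i(Q(\xi)+\widetilde Q(\xi))-(R(\xi)+\widetilde R(\xi))$, where $\alpha\in\mathbb{R}^d$, $Q(\xi)=\sum_{|\beta:2\mathbf m|=1}A_\beta\xi^\beta$ and $R(\xi)=\sum_{|\beta:2\mathbf m|=k}B_\beta\xi^\beta$ are real-valued polynomials with $R$ positive definite, and $\widetilde Q=\sum_{|\beta:2\mathbf m|>1}A_\beta\xi^\beta$, $\widetilde R=\sum_{|\beta:2\mathbf m|>k}B_\beta\xi^\beta$ are real power series converging absolutely and uniformly on $\mathcal U$. If $k=1$, then $\xi_0$ is of positive homogeneous type for $\widehat\phi$ with $R_{\xi_0}=R$, $Q_{\xi_0}=Q$, $P_{\xi_0}=R+iQ$. If $k>1$ and $|Q|$ is positive definite, then $\xi_0$ is of imaginary homogeneous type for $\widehat\phi$ with $Q_{\xi_0}=Q$. In either case the drift is $\alpha_{\xi_0}=\alpha$ and the homogeneous order is $\mu_{\xi_0}=\sum_{j=1}^d\frac1{2m_j}$.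
   Context: For multi-index $\beta$ and $\mathbf n\in\mathbb{N}_+^d$, $|\beta:\mathbf n|=\sum_j\beta_j/n_j$, $\xi^\beta=\prod_j\xi_j^{\beta_j}$. $t^E:=\exp(\log(t)E)$. $P$ homogeneous w.r.t. $E$: $P(t^E\xi)=tP(\xi)$; $\mathrm{Exp}(P)$ = set of such $E$. Positive homogeneous: real, continuous, positive definite ($\ge0$, zero only at $0$), $\mathrm{Exp}(P)\ne\emptyset$, $\{P=1\}$ compact; homogeneous order $\mu_P=\mathrm{tr}E$, $E\in\mathrm{Exp}(P)$. Subhomogeneous w.r.t. $E$ (with $\|t^E\|\to0$ as $t\to0$): for each $\epsilon>0$, compact $K$ there is $\tau>0$ with $|\widetilde P(t^E\xi)|\le\epsilon t$, $0<t<\tau$, $\xi\in K$; strongly subhomogeneous of order $l$: $C^l$ near $0$, $|t^k\partial_t^k\widetilde P(t^E\xi)|\le\epsilon t$ for $k\le l$. $\mathcal S_d$ = $\phi:\mathbb{Z}^d\to\mathbb{C}$ with all $\sum_x|x^\beta\phi(x)|<\infty$; $\widehat\phi(\xi)=\sum_x\phi(x)e^{ix\cdot\xi}$; $\Omega(\phi)=\{\xi\in(-\pi,\pi]^d:|\widehat\phi(\xi)|=1\}$; $\Gamma_{\xi_0}(\xi)=\log(\widehat\phi(\xi+\xi_0)/\widehat\phi(\xi_0))$ (principal branch) near $0$. $\xi_0$ is of positive homogeneous type if $\Gamma_{\xi_0}=i\alpha\cdot\xi-i(Q+\widetilde Q)-(R+\widetilde R)$ ($Q,R$ real polynomials vanishing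 at $0$ without linear terms; $\widetilde Q,\widetilde R$ real smooth vanishing at $0$) with $R$ positive homogeneous and some $E\in\mathrm{Exp}(R)$ with $Q$ homogeneous w.r.t. $E$ and $\widetilde Q,\widetilde R$ subhomogeneous w.r.t. $E$; $\mu_{\xi_0}=\mu_R$. Imaginary homogeneous type: $|Q|,R$ positive homogeneous, some $E\in\mathrm{Exp}(|Q|)$ and $k'>1$ with $R$ homogeneous w.r.t. $E/k'$, $\widetilde Q$ strongly subhomogeneous w.r.t. $E$ of order 2, $\widetilde R$ strongly subhomogeneous w.r.t. $E/k'$ of order 1; $\mu_{\xi_0}=\mu_{|Q|}$. Drift $\alpha_{\xi_0}=\alpha$. *)

theory Defs
  imports "HOL-Analysis.Analysis"
begin

text \<open>Multi-indices beta are functions 'n => nat; the dimension d is CARD('n).\<close>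

definition xmon :: "real^'n \<Rightarrow> ('n \<Rightarrow> nat) \<Rightarrow> real" where
  "xmon \<xi> \<beta> = (\<Prod>j\<in>UNIV. (\<xi>$j) ^ (\<beta> j))"

definition imonom :: "int^'n \<Rightarrow> ('n \<Rightarrow> nat) \<Rightarrow> real" where
  "imonom x \<beta> = (\<Prod>j\<in>UNIV. real_of_int (x$j) ^ (\<beta> j))"

definition wdeg :: "('n::finite \<Rightarrow> nat) \<Rightarrow> ('n \<Rightarrow> nat) \<Rightarrow> real" where
  "wdeg \<beta> n = (\<Sum>j\<in>UNIV. real (\<beta> j) / real (n j))"

fun matpow :: "real^'n^'n \<Rightarrow> nat \<Rightarrow> real^'n^'n" where
  "matpow A 0 = mat 1"
| "matpow A (Suc k) = A ** matpow A k"

definition mexp :: "real^'n^'n \<Rightarrow> real^'n^'n" where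
  "mexp A = (\<Sum>k. (1 / fact k) *\<^sub>R matpow A k)"

definition tpow :: "real \<Rightarrow> real^'n^'n \<Rightarrow> real^'n^'n" where
  "tpow t E = mexp (ln t *\<^sub>R E)"

definition homogeneous_wrt :: "real^'n^'n \<Rightarrow> (real^'n \<Rightarrow> 'a::real_vector) \<Rightarrow> bool" where
  "homogeneous_wrt E P \<longleftrightarrow> (\<forall>t>0. \<forall>\<xi>. P (tpow t E *v \<xi>) = t *\<^sub>R P \<xi>)"

definition Exps :: "(real^'n \<Rightarrow> 'a::real_vector) \<Rightarrow> (real^'n^'n) set" where
  "Exps P = {E. homogeneous_wrt E P}"

definition pos_homogeneous :: "(real^'n \<Rightarrow> real) \<Rightarrow> bool" where
  "pos_homogeneous P \<longleftrightarrow> continuous_on UNIV P \<and> (\<forall>\<xi>. P \<xi> \<ge> 0) \<and> (\<forall>\<xi>. P \<xi> = 0 \<longleftrightarrow> \<xi> = 0)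
     \<and> Exps P \<noteq> {} \<and> compact {\<xi>. P \<xi> = 1}"

definition hom_order :: "(real^'n \<Rightarrow> real) \<Rightarrow> real" where
  "hom_order P = trace (SOME E. E \<in> Exps P)"

definition contracting :: "real^'n^'n \<Rightarrow> bool" where
  "contracting E \<longleftrightarrow> ((\<lambda>t. norm (tpow t E)) \<longlongrightarrow> 0) (at_right 0)"

definition subhomogeneous :: "real^'n^'n \<Rightarrow> (real^'n \<Rightarrow> real) \<Rightarrow> bool" where
  "subhomogeneous E P \<longleftrightarrow> contracting E \<and>
     (\<forall>\<epsilon>>0. \<forall>K. compact K \<longrightarrow>
        (\<exists>\<tau>>0. \<forall>t. 0 < t \<and> t < \<tau> \<longrightarrow> (\<forall>\<xi>\<in>K. \<bar>P (tpow t E *v \<xi>)\<bar> \<le> \<epsilon> * t)))"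

definition pderiv_dir :: "'n \<Rightarrow> (real^'n \<Rightarrow> real) \<Rightarrow> real^'n \<Rightarrow> real" where
  "pderiv_dir j f x = deriv (\<lambda>s. f (x + s *\<^sub>R axis j 1)) 0"

fun ipderiv :: "'n list \<Rightarrow> (real^'n \<Rightarrow> real) \<Rightarrow> real^'n \<Rightarrow> real" where
  "ipderiv [] f = f"
| "ipderiv (j # js) f = pderiv_dir j (ipderiv js f)"

definition C_k_on :: "nat \<Rightarrow> (real^'n) set \<Rightarrow> (real^'n \<Rightarrow> real) \<Rightarrow> bool" where
  "C_k_on l U f \<longleftrightarrow>
     (\<forall>js. length js < l \<longrightarrow> (\<forall>j. \<forall>x\<in>U. (\<lambda>s. ipderiv js f (x + s *\<^sub>R axis j 1)) differentiable (at 0)))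
   \<and> (\<forall>js. length js \<le> l \<longrightarrow> continuous_on U (ipderiv js f))"

definition C_k_near0 :: "nat \<Rightarrow> (real^'n \<Rightarrow> real) \<Rightarrow> bool" where
  "C_k_near0 l f \<longleftrightarrow> (\<exists>U. open U \<and> 0 \<in> U \<and> C_k_on l U f)"

definition smooth_near0 :: "(real^'n \<Rightarrow> real) \<Rightarrow> bool" where
  "smooth_near0 f \<longleftrightarrow> (\<exists>U. open U \<and> 0 \<in> U \<and> (\<forall>l. C_k_on l U f))"

definition strongly_subhomogeneous :: "real^'n^'n \<Rightarrow> nat \<Rightarrow> (real^'n \<Rightarrow> real) \<Rightarrow> bool" where
  "strongly_subhomogeneous E l P \<longleftrightarrow> contracting E \<and> C_k_near0 l P \<and>
     (\<forall>\<epsilon>>0. \<forall>K. compact K \<longrightarrow>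
        (\<exists>\<tau>>0. \<forall>t. 0 < t \<and> t < \<tau> \<longrightarrow> (\<forall>\<xi>\<in>K. \<forall>k\<le>l.
            \<bar>t ^ k * (deriv ^^ k) (\<lambda>s. P (tpow s E *v \<xi>)) t\<bar> \<le> \<epsilon> * t)))"

definition poly_no_lin :: "(real^'n \<Rightarrow> real) \<Rightarrow> bool" where
  "poly_no_lin P \<longleftrightarrow> (\<exists>F c. finite F \<and> (\<forall>\<beta>\<in>F. (\<Sum>j\<in>UNIV. \<beta> j) \<ge> 2)
      \<and> (\<forall>\<xi>. P \<xi> = (\<Sum>\<beta>\<in>F. c \<beta> * xmon \<xi> \<beta>)))"

definition Schwartz_d :: "(int^'n \<Rightarrow> complex) \<Rightarrow> bool" where
  "Schwartz_d \<phi> \<longleftrightarrow> (\<forall>\<beta>::'n \<Rightarrow> nat. (\<lambda>x. norm (imonom x \<beta> *\<^sub>R \<phi> x)) summable_on UNIV)"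

definition idot :: "int^'n \<Rightarrow> real^'n \<Rightarrow> real" where
  "idot x \<xi> = (\<Sum>j\<in>UNIV. real_of_int (x$j) * \<xi>$j)"

definition fhat :: "(int^'n \<Rightarrow> complex) \<Rightarrow> real^'n \<Rightarrow> complex" where
  "fhat \<phi> \<xi> = (\<Sum>\<^sub>\<infinity>x. \<phi> x * cis (idot x \<xi>))"

definition Omega :: "(int^'n \<Rightarrow> complex) \<Rightarrow> (real^'n) set" where
  "Omega \<phi> = {\<xi>. (\<forall>j. - pi < \<xi>$j \<and> \<xi>$j \<le> pi) \<and> cmod (fhat \<phi> \<xi>) = 1}"

definition Gamma_at :: "(int^'n \<Rightarrow> complex) \<Rightarrow> real^'n \<Rightarrow> real^'n \<Rightarrow> complex" where
  "Gamma_at \<phi> \<xi>0 \<xi> = Ln (fhat \<phi> (\<xi> + \<xi>0) / fhat \<phi> \<xi>0)"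

definition Gamma_form :: "(int^'n \<Rightarrow> complex) \<Rightarrow> real^'n \<Rightarrow> real^'n
   \<Rightarrow> (real^'n \<Rightarrow> real) \<Rightarrow> (real^'n \<Rightarrow> real) \<Rightarrow> (real^'n \<Rightarrow> real) \<Rightarrow> (real^'n \<Rightarrow> real) \<Rightarrow> bool" where
  "Gamma_form \<phi> \<xi>0 \<alpha> Q Qt R Rt \<longleftrightarrow>
     (\<exists>U. open U \<and> 0 \<in> U \<and> (\<forall>\<xi>\<in>U. Gamma_at \<phi> \<xi>0 \<xi> =
         \<i> * complex_of_real (\<alpha> \<bullet> \<xi>) - \<i> * complex_of_real (Q \<xi> + Qt \<xi>) - complex_of_real (R \<xi> + Rt \<xi>)))
   \<and> poly_no_lin Q \<and> poly_no_lin R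
   \<and> smooth_near0 Qt \<and> smooth_near0 Rt \<and> Qt 0 = 0 \<and> Rt 0 = 0"

definition pos_hom_type :: "(int^'n \<Rightarrow> complex) \<Rightarrow> real^'n \<Rightarrow> real^'n
   \<Rightarrow> (real^'n \<Rightarrow> real) \<Rightarrow> (real^'n \<Rightarrow> real) \<Rightarrow> bool" where
  "pos_hom_type \<phi> \<xi>0 \<alpha> Q R \<longleftrightarrow>
     (\<exists>Qt Rt. Gamma_form \<phi> \<xi>0 \<alpha> Q Qt R Rt \<and> pos_homogeneous R \<and>
        (\<exists>E\<in>Exps R. homogeneous_wrt E Q \<and> subhomogeneous E Qt \<and> subhomogeneous E Rt))"

definition imag_hom_type :: "(int^'n \<Rightarrow> complex) \<Rightarrow> real^'n \<Rightarrow> real^'n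
   \<Rightarrow> (real^'n \<Rightarrow> real) \<Rightarrow> (real^'n \<Rightarrow> real) \<Rightarrow> bool" where
  "imag_hom_type \<phi> \<xi>0 \<alpha> Q R \<longleftrightarrow>
     (\<exists>Qt Rt. Gamma_form \<phi> \<xi>0 \<alpha> Q Qt R Rt \<and> pos_homogeneous (\<lambda>\<xi>. \<bar>Q \<xi>\<bar>) \<and> pos_homogeneous R \<and>
        (\<exists>E\<in>Exps (\<lambda>\<xi>. \<bar>Q \<xi>\<bar>). \<exists>k'>1. homogeneous_wrt ((1 / k') *\<^sub>R E) R
            \<and> strongly_subhomogeneous E 2 Qt \<and> strongly_subhomogeneous ((1 / k') *\<^sub>R E) 1 Rt))"

end

theory Submission
  imports Defs
begin

section \<open>The matrix exponential\<close>

definition entry_norm :: "real^'n^'n \<Rightarrow> real" where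
  "entry_norm A = (\<Sum>i\<in>UNIV. \<Sum>j\<in>UNIV. \<bar>A $ i $ j\<bar>)"

lemma entry_norm_nonneg: "0 \<le> entry_norm A"
  by (simp add: entry_norm_def sum_nonneg)

lemma row_sum_le_entry_norm: "(\<Sum>j\<in>UNIV. \<bar>A $ i $ j\<bar>) \<le> entry_norm A"
  unfolding entry_norm_def by (rule member_le_sum) (auto intro: sum_nonneg)

lemma norm_le_entry_norm: "norm A \<le> entry_norm A"
proof -
  have "norm A \<le> (\<Sum>i\<in>UNIV. norm (A $ i))"
    unfolding norm_vec_def by (rule L2_set_le_sum) auto
  also have "\<dots> \<le> (\<Sum>i\<in>UNIV. \<Sum>j\<in>UNIV. \<bar>A $ i $ j\<bar>)"
    by (intro sum_mono norm_le_l1_cart)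
  finally show ?thesis by (simp add: entry_norm_def)
qed

lemma entry_norm_mult: "entry_norm (A ** B) \<le> entry_norm A * entry_norm B"
proof -
  have "entry_norm (A ** B) \<le> (\<Sum>i\<in>UNIV. \<Sum>j\<in>UNIV. \<Sum>k\<in>UNIV. \<bar>A $ i $ k\<bar> * \<bar>B $ k $ j\<bar>)"
    unfolding entry_norm_def matrix_matrix_mult_def
    by (auto intro!: sum_mono order_trans[OF sum_abs] simp: abs_mult)
  also have "\<dots> = (\<Sum>i\<in>UNIV. \<Sum>k\<in>UNIV. \<bar>A $ i $ k\<bar> * (\<Sum>j\<in>UNIV. \<bar>B $ k $ j\<bar>))"
    by (simp add: sum_distrib_left) (subst sum.swap, simp)
  also have "\<dots> \<le> (\<Sum>i\<in>UNIV. \<Sum>k\<in>UNIV. \<bar>A $ i $ k\<bar> * entry_norm B)"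
    by (intro sum_mono mult_left_mono row_sum_le_entry_norm) auto
  also have "\<dots> = entry_norm A * entry_norm B"
    by (simp add: entry_norm_def sum_distrib_right)
  finally show ?thesis .
qed

lemma entry_norm_matpow:
  fixes A :: "real^'n^'n"
  shows "entry_norm (matpow A k) \<le> entry_norm (mat 1 :: real^'n^'n) * entry_norm A ^ k"
proof (induction k)
  case (Suc k)
  have "entry_norm (matpow A (Suc k)) \<le> entry_norm A * entry_norm (matpow A k)"
    using entry_norm_mult by simp
  also have "\<dots> \<le> entry_norm A * (entry_norm (mat 1 :: real^'n^'n) * entry_norm A ^ k)"
    by (rule mult_left_mono[OF Suc entry_norm_nonneg])
  finally show ?case by (simp add: algebra_simps)
qed simp

lemma summable_mexp: "summable (\<lambda>k. (1 / fact k) *\<^sub>R matpow (A :: real^'n^'n) k)"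
proof (rule summable_norm_cancel, rule summable_comparison_test')
  let ?C = "entry_norm (mat 1 :: real^'n^'n)"
  show "summable (\<lambda>k. ?C * (inverse (fact k) * entry_norm A ^ k))"
    by (intro summable_mult summable_exp)
  fix k :: nat
  have "norm (matpow A k) \<le> ?C * entry_norm A ^ k"
    using norm_le_entry_norm entry_norm_matpow order_trans by blast
  then show "norm (norm ((1 / fact k) *\<^sub>R matpow A k)) \<le> ?C * (inverse (fact k) * entry_norm A ^ k)"
    by (simp add: field_simps divide_right_mono)
qed

lemma bounded_linear_entry: "bounded_linear (\<lambda>M::real^'n^'n. M $ i $ j)"
  using bounded_linear_compose[OF bounded_linear_vec_nth bounded_linear_vec_nth] .

lemma matpow_scaleR: "matpow (s *\<^sub>R A) k = (s ^ k) *\<^sub>R matpow A k"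
  by (induction k) (simp_all add: scalar_matrix_assoc matrix_scalar_ac mult.commute)

lemma mexp_scaleR_entry:
  fixes E :: "real^'n^'n"
  shows "summable (\<lambda>k. matpow E k $ i $ j / fact k * s ^ k)"
    and "mexp (s *\<^sub>R E) $ i $ j = (\<Sum>k. matpow E k $ i $ j / fact k * s ^ k)"
proof -
  have *: "((1 / fact k) *\<^sub>R matpow (s *\<^sub>R E) k) $ i $ j = matpow E k $ i $ j / fact k * s ^ k" for k
    by (simp add: matpow_scaleR)
  show "summable (\<lambda>k. matpow E k $ i $ j / fact k * s ^ k)"
    using bounded_linear.summable[OF bounded_linear_entry[of i j] summable_mexp[of "s *\<^sub>R E"]]
    by (simp only: *)
  show "mexp (s *\<^sub>R E) $ i $ j = (\<Sum>k. matpow E k $ i $ j / fact k * s ^ k)"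
    using bounded_linear.suminf[OF bounded_linear_entry[of i j] summable_mexp]
    unfolding mexp_def by (simp only: *)
qed

lemma mexp_zero: "mexp (0 :: real^'n^'n) = mat 1"
proof -
  have "mexp ((0::real) *\<^sub>R (mat 1 :: real^'n^'n)) $ i $ j = mat 1 $ i $ j" for i j
    by (simp only: mexp_scaleR_entry(2) powser_zero) simp
  then show ?thesis by (simp add: vec_eq_iff)
qed

lemma mexp_scaleR_entry_deriv:
  fixes E :: "real^'n^'n"
  shows "((\<lambda>s. mexp (s *\<^sub>R E) $ i $ j) has_real_derivative E $ i $ j) (at 0)"
proof -
  define c where "c k = matpow E k $ i $ j / fact k" for k
  have "((\<lambda>s. \<Sum>k. c k * s ^ k) has_real_derivative (\<Sum>k. diffs c k * 0 ^ k)) (at 0)"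
    by (rule termdiffs_strong_converges_everywhere) (unfold c_def, rule mexp_scaleR_entry(1))
  then show ?thesis
    by (simp add: mexp_scaleR_entry(2) c_def[symmetric] diffs_def) (simp add: c_def)
qed

lemma permutes_nonid_moves_other:
  assumes p: "p permutes (UNIV :: 'n set)" and "p \<noteq> id"
  shows "\<exists>j. j \<noteq> i \<and> p j \<noteq> j"
proof -
  obtain k where k: "p k \<noteq> k" using \<open>p \<noteq> id\<close> by (auto simp: fun_eq_iff)
  show ?thesis
  proof (cases "k = i")
    case True
    then have "p (p i) \<noteq> p i" using k permutes_inj[OF p] by (auto dest: injD)
    then show ?thesis using k True by metis
  qed (use k in blast)
qed

lemma prod_mat1_permutes_remove:
  assumes "p permutes (UNIV :: 'n::finite set)"
  shows "(\<Prod>j\<in>UNIV - {i}. (mat 1 :: real^'n^'n) $ j $ p j) = (if p = id then 1 else 0)"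
proof (cases "p = id")
  case False
  then obtain j where "j \<noteq> i" "p j \<noteq> j" using permutes_nonid_moves_other[OF assms] by blast
  then show ?thesis using False by (intro trans[OF prod_zero]) (auto simp: mat_def intro!: bexI[of _ j])
qed (simp add: mat_def)

lemma det_has_derivative_at_mat1:
  fixes M :: "real \<Rightarrow> real^'n^'n"
  assumes M0: "M 0 = mat 1"
    and M': "\<And>i j. ((\<lambda>s. M s $ i $ j) has_real_derivative D $ i $ j) (at 0)"
  shows "((\<lambda>s. det (M s)) has_real_derivative trace D) (at 0)"
proof -
  have prod_deriv: "((\<lambda>s. \<Prod>i\<in>UNIV. M s $ i $ p i) has_real_derivative
      (\<Sum>i\<in>UNIV. D $ i $ p i * (\<Prod>j\<in>UNIV - {i}. M 0 $ j $ p j))) (at 0)" for p :: "'n \<Rightarrow> 'n"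
  proof -
    have "((\<lambda>s. \<Prod>i\<in>UNIV. M s $ i $ p i) has_derivative
        (\<lambda>y. \<Sum>i\<in>UNIV. (D $ i $ p i * y) * (\<Prod>j\<in>UNIV - {i}. M 0 $ j $ p j))) (at 0)"
      using M' by (intro has_derivative_prod) (simp add: has_field_derivative_def)
    moreover have "(\<lambda>y. \<Sum>i\<in>UNIV. (D $ i $ p i * y) * (\<Prod>j\<in>UNIV - {i}. M 0 $ j $ p j))
        = (*) (\<Sum>i\<in>UNIV. D $ i $ p i * (\<Prod>j\<in>UNIV - {i}. M 0 $ j $ p j))"
      by (auto simp: fun_eq_iff sum_distrib_left mult_ac)
    ultimately show ?thesis by (simp add: has_field_derivative_def)
  qed
  have "((\<lambda>s. det (M s)) has_real_derivative (\<Sum>p | p permutes (UNIV::'n set).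
      of_int (sign p) * (\<Sum>i\<in>UNIV. D $ i $ p i * (\<Prod>j\<in>UNIV - {i}. M 0 $ j $ p j)))) (at 0)"
    unfolding det_def by (intro DERIV_sum DERIV_cmult prod_deriv)
  also have "(\<Sum>p | p permutes (UNIV::'n set).
      of_int (sign p) * (\<Sum>i\<in>UNIV. D $ i $ p i * (\<Prod>j\<in>UNIV - {i}. M 0 $ j $ p j)))
    = (\<Sum>p | p permutes (UNIV::'n set). if p = id then trace D else 0)"
    by (intro sum.cong refl) (auto simp: M0 prod_mat1_permutes_remove sign_id trace_def)
  also have "\<dots> = trace D"
    by (simp add: permutes_id)
  finally show ?thesis .
qed

lemma det_mexp_scaleR_deriv:
  "((\<lambda>s. det (mexp (s *\<^sub>R E))) has_real_derivative trace E) (at 0)"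
  by (rule det_has_derivative_at_mat1) (simp_all add: mexp_zero mexp_scaleR_entry_deriv)

section \<open>Diagonal matrices\<close>

definition diag_matrix :: "('n::finite \<Rightarrow> real) \<Rightarrow> real^'n^'n" where
  "diag_matrix a = (\<chi> i j. if i = j then a i else 0)"

lemma diag_matrix_nth [simp]: "diag_matrix a $ i $ j = (if i = j then a i else 0)"
  by (simp add: diag_matrix_def)

lemma mat1_eq_diag_matrix: "mat 1 = diag_matrix (\<lambda>_. 1)"
  by (simp add: mat_def diag_matrix_def)

lemma scaleR_diag_matrix: "c *\<^sub>R diag_matrix a = diag_matrix (\<lambda>i. c * a i)"
  by (simp add: vec_eq_iff)

lemma det_diag_matrix: "det (diag_matrix a) = prod a UNIV"
  by (subst det_diagonal) auto

lemma if_zero_times: "(if P then c else (0::real)) * y = (if P then c * y else 0)"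
  by simp

lemma times_if_zero: "y * (if P then c else (0::real)) = (if P then y * c else 0)"
  by simp

lemma diag_matrix_mult: "diag_matrix a ** diag_matrix b = diag_matrix (\<lambda>i. a i * b i)"
  by (simp add: matrix_matrix_mult_def vec_eq_iff if_zero_times)

lemma diag_matrix_mulv: "diag_matrix a *v x = (\<chi> i. a i * x $ i)"
  by (simp add: matrix_vector_mult_def vec_eq_iff if_zero_times)

lemma entry_norm_diag_matrix: "entry_norm (diag_matrix a) = (\<Sum>i\<in>UNIV. \<bar>a i\<bar>)"
proof -
  have "(\<Sum>j\<in>UNIV. \<bar>diag_matrix a $ i $ j\<bar>) = \<bar>a i\<bar>" for i
    by (simp add: if_distrib[of abs] cong: if_cong)
  then show ?thesis by (simp add: entry_norm_def)
qed

lemma mexp_diag_matrix: "mexp (diag_matrix a) = diag_matrix (\<lambda>i. exp (a i))"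
proof -
  have matpow: "matpow (diag_matrix a) k = diag_matrix (\<lambda>i. a i ^ k)" for k
    by (induction k) (simp_all add: mat1_eq_diag_matrix diag_matrix_mult)
  have "exp (a i) = (\<Sum>k. a i ^ k / fact k * 1 ^ k)" for i
    by (simp add: exp_def inverse_eq_divide)
  then have "mexp ((1::real) *\<^sub>R diag_matrix a) $ i $ j = diag_matrix (\<lambda>i. exp (a i)) $ i $ j" for i j
    unfolding mexp_scaleR_entry(2) by (simp add: matpow)
  then show ?thesis by (simp add: vec_eq_iff)
qed

lemma tpow_diag_matrix: "t > 0 \<Longrightarrow> tpow t (diag_matrix a) = diag_matrix (\<lambda>i. t powr a i)"
  unfolding tpow_def scaleR_diag_matrix mexp_diag_matrix by (simp add: powr_def mult.commute)

lemma tpow_diag_matrix_mulv: "t > 0 \<Longrightarrow> tpow t (diag_matrix a) *v x = (\<chi> i. t powr a i * x $ i)"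
  by (simp add: tpow_diag_matrix diag_matrix_mulv)

section \<open>The trace of an exponent of a positive homogeneous function\<close>

lemma abs_det_le_entry_bound:
  fixes A :: "real^'n^'n"
  assumes "\<And>i j. \<bar>A $ i $ j\<bar> \<le> B"
  shows "\<bar>det A\<bar> \<le> fact CARD('n) * B ^ CARD('n)"
proof -
  have "\<bar>det A\<bar> \<le> (\<Sum>p | p permutes (UNIV::'n set). \<bar>of_int (sign p) * (\<Prod>i\<in>UNIV. A $ i $ p i)\<bar>)"
    unfolding det_def by (rule sum_abs)
  also have "\<dots> \<le> (\<Sum>p | p permutes (UNIV::'n set). B ^ CARD('n))"
  proof (rule sum_mono)
    fix p :: "'n \<Rightarrow> 'n"
    have "\<bar>of_int (sign p) * (\<Prod>i\<in>UNIV. A $ i $ p i)\<bar> = (\<Prod>i\<in>UNIV. \<bar>A $ i $ p i\<bar>)"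
      by (simp add: abs_mult abs_prod sign_def)
    also have "\<dots> \<le> (\<Prod>i\<in>(UNIV::'n set). B)"
      by (rule prod_mono) (simp add: assms)
    finally show "\<bar>of_int (sign p) * (\<Prod>i\<in>UNIV. A $ i $ p i)\<bar> \<le> B ^ CARD('n)" by simp
  qed
  also have "\<dots> = fact CARD('n) * B ^ CARD('n)"
    by (simp add: card_permutations)
  finally show ?thesis .
qed

lemma det_matpow: "det (matpow A n) = det A ^ n"
  by (induction n) (simp_all add: det_mul)

text \<open>The powers of \<open>G\<close> map the \<open>r\<close>-ball into the \<open>B\<close>-ball, so their entries stay bounded by
  \<open>B / r\<close>; hence so does \<open>det G ^ n\<close>.\<close>

lemma abs_det_le_1_if_invariant:
  fixes G :: "real^'n^'n" and P :: "real^'n \<Rightarrow> real"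
  assumes inv: "\<And>x. P (G *v x) = P x"
    and r: "r > 0" "\<And>x. norm x \<le> r \<Longrightarrow> P x \<le> 1"
    and B: "\<And>x. P x \<le> 1 \<Longrightarrow> norm x \<le> B"
  shows "\<bar>det G\<bar> \<le> 1"
proof (rule ccontr)
  assume "\<not> \<bar>det G\<bar> \<le> 1"
  then obtain n where n: "fact CARD('n) * (B / r) ^ CARD('n) < \<bar>det G\<bar> ^ n"
    using real_arch_pow[of "\<bar>det G\<bar>"] by auto
  have inv_pow: "P (matpow G n *v x) = P x" for n x
    by (induction n) (simp_all add: matrix_vector_mul_assoc[symmetric] inv)
  have "\<bar>matpow G n $ i $ j\<bar> \<le> B / r" for i j
  proof -
    let ?y = "r *\<^sub>R axis j (1::real)"
    have "P ?y \<le> 1" using r by (intro r(2)) (simp add: norm_axis_1)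
    then have "norm (matpow G n *v ?y) \<le> B" by (intro B) (simp add: inv_pow)
    then have "\<bar>(matpow G n *v ?y) $ i\<bar> \<le> B" using component_le_norm_cart order_trans by blast
    then show ?thesis
      using r by (simp add: matrix_vector_mult_def axis_def times_if_zero abs_mult field_simps)
  qed
  then have "\<bar>det (matpow G n)\<bar> \<le> fact CARD('n) * (B / r) ^ CARD('n)"
    by (rule abs_det_le_entry_bound)
  then show False using n by (simp add: det_matpow power_abs)
qed

text \<open>Two matrices that scale a gauge \<open>P\<close> by the same factor differ by a \<open>P\<close>-preserving matrix
  and its inverse, so by the previous lemma their determinants agree up to sign.\<close>

lemma abs_det_eq_if_same_scaling:
  fixes A D :: "real^'n^'n" and P :: "real^'n \<Rightarrow> real"
  assumes P0: "\<And>x. P x = 0 \<longleftrightarrow> x = 0"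
    and r: "r > 0" "\<And>x. norm x \<le> r \<Longrightarrow> P x \<le> 1"
    and B: "\<And>x. P x \<le> 1 \<Longrightarrow> norm x \<le> B"
    and t: "t > 0" and A: "\<And>x. P (A *v x) = t * P x" and D: "\<And>x. P (D *v x) = t * P x"
    and Di: "D ** Di = mat 1"
  shows "\<bar>det A\<bar> = \<bar>det D\<bar>"
proof -
  have "\<forall>x. A *v x = 0 \<longrightarrow> x = 0"
    using A[of 0] A t P0 by (metis mult_eq_0_iff less_irrefl)
  then obtain Ai where Ai: "Ai ** A = mat 1" using matrix_left_invertible_ker by blast
  have Di': "Di ** D = mat 1" and Ai': "A ** Ai = mat 1"
    using Di Ai matrix_left_right_inverse by blast+
  define G where "G = Di ** A"
  define H where "H = Ai ** D"
  have "D *v (G *v x) = A *v x" for x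
    by (simp add: G_def matrix_vector_mul_assoc matrix_mul_assoc Di)
  then have G: "P (G *v x) = P x" for x using A D t by (metis mult_cancel_left less_irrefl)
  have "A *v (H *v x) = D *v x" for x
    by (simp add: H_def matrix_vector_mul_assoc matrix_mul_assoc Ai')
  then have H: "P (H *v x) = P x" for x using A D t by (metis mult_cancel_left less_irrefl)
  have "\<bar>det G\<bar> * \<bar>det H\<bar> = \<bar>det (Di ** D) * det (A ** Ai)\<bar>"
    by (simp add: G_def H_def det_mul abs_mult mult_ac)
  then have GH: "\<bar>det G\<bar> * \<bar>det H\<bar> = 1" by (simp add: Di' Ai')
  have "\<bar>det G\<bar> * \<bar>det H\<bar> \<le> \<bar>det G\<bar>"
    by (rule mult_left_le[OF abs_det_le_1_if_invariant[where P = P, OF H r B] abs_ge_zero])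
  then have "1 \<le> \<bar>det G\<bar>" by (simp only: GH)
  with abs_det_le_1_if_invariant[where P = P, OF G r B] have "\<bar>det G\<bar> = 1" by simp
  moreover have "det A = det D * det G"
    by (simp add: G_def det_mul[symmetric] matrix_mul_assoc Di)
  ultimately show ?thesis by (simp add: abs_mult)
qed

lemma trace_eq_if_homogeneous:
  fixes P :: "real^'n \<Rightarrow> real" and E :: "real^'n^'n"
  assumes P0: "\<And>x. P x = 0 \<longleftrightarrow> x = 0"
    and r: "r > 0" "\<And>x. norm x \<le> r \<Longrightarrow> P x \<le> 1"
    and B: "\<And>x. P x \<le> 1 \<Longrightarrow> norm x \<le> B"
    and hom_diag: "homogeneous_wrt (diag_matrix a) P" and hom_E: "homogeneous_wrt E P"
  shows "trace E = sum a UNIV"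
proof -
  define c where "c = sum a UNIV"
  have abs_det: "\<bar>det (mexp (s *\<^sub>R E))\<bar> = exp (c * s)" for s
  proof -
    let ?t = "exp s"
    have "\<bar>det (tpow ?t E)\<bar> = \<bar>det (diag_matrix (\<lambda>i. ?t powr a i))\<bar>"
    proof (rule abs_det_eq_if_same_scaling[OF P0 r B, where t = ?t])
      show "diag_matrix (\<lambda>i. ?t powr a i) ** diag_matrix (\<lambda>i. ?t powr - a i) = mat 1"
        by (simp add: diag_matrix_mult mat1_eq_diag_matrix powr_add[symmetric])
    qed (use hom_E hom_diag in \<open>simp_all add: homogeneous_wrt_def tpow_diag_matrix\<close>)
    then show ?thesis
      by (simp add: tpow_def det_diag_matrix abs_prod c_def exp_sum[symmetric] powr_def sum_distrib_right)
  qed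
  have deriv: "((\<lambda>s. det (mexp (s *\<^sub>R E))) has_real_derivative trace E) (at 0)"
    by (rule det_mexp_scaleR_deriv)
  have "((\<lambda>s. det (mexp (s *\<^sub>R E))) \<longlongrightarrow> det (mexp (0 *\<^sub>R E))) (nhds 0)"
    using DERIV_isCont[OF deriv] by (metis isCont_def tendsto_at_iff_tendsto_nhds)
  then have "\<forall>\<^sub>F s in nhds 0. det (mexp (s *\<^sub>R E)) > 0"
    by (rule order_tendstoD) (simp add: mexp_zero)
  then have "\<forall>\<^sub>F s in nhds 0. det (mexp (s *\<^sub>R E)) = exp (c * s)"
    by eventually_elim (metis abs_det abs_of_pos)
  from DERIV_cong_ev[OF refl this refl] deriv
  have "((\<lambda>s. exp (c * s)) has_real_derivative trace E) (at 0)" by simp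
  moreover have "((\<lambda>s. exp (c * s)) has_real_derivative c) (at 0)"
    by (auto intro!: derivative_eq_intros)
  ultimately show ?thesis using DERIV_unique c_def by blast
qed

section \<open>Positive homogeneous functions with a diagonal exponent\<close>

lemma compact_box_boundary:
  "compact {\<eta>::real^'n. (\<forall>j. \<bar>\<eta> $ j\<bar> \<le> 1) \<and> (\<exists>j. \<bar>\<eta> $ j\<bar> = 1)}"
proof -
  have "{\<eta>::real^'n. (\<forall>j. \<bar>\<eta> $ j\<bar> \<le> 1) \<and> (\<exists>j. \<bar>\<eta> $ j\<bar> = 1)}
      = cbox (-1) 1 \<inter> (\<Union>j. {\<eta>. \<bar>\<eta> $ j\<bar> = 1})"
    by (auto simp: mem_box_cart abs_le_iff)
  moreover have "closed (\<Union>j. {\<eta>::real^'n. \<bar>\<eta> $ j\<bar> = 1})"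
    by (intro closed_Union) (auto intro!: closed_Collect_eq continuous_intros)
  ultimately show ?thesis by (simp add: compact_Int_closed)
qed

lemma diag_rescale_to_box_boundary:
  fixes \<xi> :: "real^'n"
  assumes "\<xi> \<noteq> 0" and a: "\<And>j. a j > 0"
  obtains s \<eta> where "s > 0" "(\<forall>j. \<bar>\<eta> $ j\<bar> \<le> 1) \<and> (\<exists>j. \<bar>\<eta> $ j\<bar> = 1)"
    "\<xi> = (\<chi> i. s powr a i * \<eta> $ i)" "\<And>j. \<bar>\<xi> $ j\<bar> powr (1 / a j) \<le> s"
proof -
  define f where "f i = \<bar>\<xi> $ i\<bar> powr (1 / a i)" for i
  define s where "s = Max (range f)"
  have f_le: "f i \<le> s" for i unfolding s_def by (rule Max_ge) auto
  have "s \<in> range f" unfolding s_def by (rule Max_in) auto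
  then obtain j0 where j0: "f j0 = s" by auto
  obtain i1 where "\<xi> $ i1 \<noteq> 0" using \<open>\<xi> \<noteq> 0\<close> by (auto simp: vec_eq_iff)
  then have "0 < f i1" by (simp add: f_def)
  then have s: "s > 0" using f_le[of i1] by linarith
  have f_powr: "f i powr a i = \<bar>\<xi> $ i\<bar>" for i using a[of i] by (simp add: f_def powr_powr)
  define \<eta> where "\<eta> = (\<chi> i. s powr (- a i) * \<xi> $ i)"
  have \<eta>_abs: "\<bar>\<eta> $ i\<bar> = \<bar>\<xi> $ i\<bar> / s powr a i" for i
    using s by (simp add: \<eta>_def abs_mult powr_minus divide_inverse mult.commute)
  have "\<bar>\<xi> $ i\<bar> \<le> s powr a i" for i
    unfolding f_powr[symmetric] using f_le[of i] a[of i] by (intro powr_mono2) (auto simp: f_def)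
  then have "\<bar>\<eta> $ i\<bar> \<le> 1" for i using s by (simp add: \<eta>_abs divide_le_eq_1)
  moreover have "\<bar>\<xi> $ j0\<bar> = s powr a j0" using f_powr[of j0] j0 by simp
  then have "\<bar>\<eta> $ j0\<bar> = 1" using s by (simp add: \<eta>_abs)
  moreover have "\<xi> = (\<chi> i. s powr a i * \<eta> $ i)"
    using s by (simp add: \<eta>_def vec_eq_iff powr_minus)
  ultimately show thesis using that[OF s] f_le by (auto simp: f_def)
qed

lemma homogeneous_diag_lower_bound:
  fixes P :: "real^'n \<Rightarrow> real"
  assumes cont: "continuous_on UNIV P" and nonneg: "\<And>\<xi>. P \<xi> \<ge> 0"
    and P0: "\<And>\<xi>. P \<xi> = 0 \<longleftrightarrow> \<xi> = 0"
    and hom: "homogeneous_wrt (diag_matrix a) P" and a: "\<And>j. a j > 0"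
  shows "\<exists>c>0. \<forall>\<xi> j. c * \<bar>\<xi> $ j\<bar> powr (1 / a j) \<le> P \<xi>"
proof -
  let ?K = "{\<eta>::real^'n. (\<forall>j. \<bar>\<eta> $ j\<bar> \<le> 1) \<and> (\<exists>j. \<bar>\<eta> $ j\<bar> = 1)}"
  have "(\<chi> j. 1) \<in> ?K" by simp
  then have "?K \<noteq> {}" unfolding ex_in_conv[symmetric] by (rule exI)
  then have "\<exists>x\<in>?K. \<forall>y\<in>?K. P x \<le> P y"
    by (rule continuous_attains_inf[OF compact_box_boundary _ continuous_on_subset[OF cont]]) simp
  then obtain x0 where x0: "x0 \<in> ?K" "\<And>y. y \<in> ?K \<Longrightarrow> P x0 \<le> P y" by blast
  have "x0 \<noteq> 0"
  proof
    assume "x0 = 0"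
    with x0(1) show False by simp
  qed
  then have c: "P x0 > 0" using nonneg[of x0] P0[of x0] by linarith
  have hom': "P (\<chi> i. t powr a i * \<xi> $ i) = t * P \<xi>" if "t > 0" for t \<xi>
  proof -
    have "P (tpow t (diag_matrix a) *v \<xi>) = t * P \<xi>"
      using hom that unfolding homogeneous_wrt_def by simp
    then show ?thesis by (simp only: tpow_diag_matrix_mulv[OF that])
  qed
  have "P x0 * \<bar>\<xi> $ j\<bar> powr (1 / a j) \<le> P \<xi>" for \<xi> j
  proof (cases "\<xi> = 0")
    case False
    obtain s \<eta> where s: "s > 0" "(\<forall>j. \<bar>\<eta> $ j\<bar> \<le> 1) \<and> (\<exists>j. \<bar>\<eta> $ j\<bar> = 1)"
        "\<xi> = (\<chi> i. s powr a i * \<eta> $ i)" "\<And>j. \<bar>\<xi> $ j\<bar> powr (1 / a j) \<le> s"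
      using diag_rescale_to_box_boundary[of \<xi> a, OF False a] by blast
    have "P x0 * \<bar>\<xi> $ j\<bar> powr (1 / a j) \<le> P \<eta> * s"
      using s(2,4) x0(2)[of \<eta>] c by (intro mult_mono) auto
    also have "\<dots> = P \<xi>" using hom'[OF s(1), of \<eta>] s(3) by simp
    finally show ?thesis .
  qed (simp add: nonneg)
  with c show ?thesis by blast
qed

lemma
  fixes P :: "real^'n \<Rightarrow> real"
  assumes cont: "continuous_on UNIV P" and nonneg: "\<And>\<xi>. P \<xi> \<ge> 0"
    and P0: "\<And>\<xi>. P \<xi> = 0 \<longleftrightarrow> \<xi> = 0"
    and hom: "homogeneous_wrt (diag_matrix a) P" and a: "\<And>j. a j > 0"
  shows pos_homogeneous_of_diag: "pos_homogeneous P"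
    and hom_order_of_diag: "hom_order P = sum a UNIV"
proof -
  obtain c where c: "c > 0" "\<And>\<xi> j. c * \<bar>\<xi> $ j\<bar> powr (1 / a j) \<le> P \<xi>"
    using homogeneous_diag_lower_bound[OF assms] by blast
  define B where "B = (\<Sum>j\<in>(UNIV::'n set). (1 / c) powr a j)"
  have sublevel_bounded: "norm \<xi> \<le> B" if "P \<xi> \<le> 1" for \<xi>
  proof -
    have "\<bar>\<xi> $ j\<bar> \<le> (1 / c) powr a j" for j
    proof -
      have "\<bar>\<xi> $ j\<bar> powr (1 / a j) \<le> 1 / c"
        using c(2)[of \<xi> j] that c(1) by (simp add: field_simps)
      then have "(\<bar>\<xi> $ j\<bar> powr (1 / a j)) powr a j \<le> (1 / c) powr a j"
        using a[of j] by (intro powr_mono2) auto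
      then show ?thesis using a[of j] by (simp add: powr_powr)
    qed
    then have "(\<Sum>j\<in>UNIV. \<bar>\<xi> $ j\<bar>) \<le> B" unfolding B_def by (intro sum_mono)
    then show ?thesis using norm_le_l1_cart[of \<xi>] by linarith
  qed
  obtain r where r: "r > 0" "\<And>x. norm x \<le> r \<Longrightarrow> P x \<le> 1"
  proof -
    have "isCont P 0" using cont by (simp add: continuous_on_eq_continuous_at)
    then obtain d where d: "d > 0" "\<And>x. dist x 0 < d \<Longrightarrow> dist (P x) (P 0) < 1"
      unfolding continuous_at_eps_delta by (metis zero_less_one)
    have "P x \<le> 1" if "norm x \<le> d / 2" for x
      using d(2)[of x] that d(1) P0[of 0] by (simp add: dist_norm)
    then show thesis using d(1) by (intro that[of "d / 2"]) auto
  qed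
  have "closed {\<xi>. P \<xi> = 1}"
    using cont by (intro closed_Collect_eq) (auto simp: continuous_on_eq_continuous_at)
  moreover have "bounded {\<xi>. P \<xi> = 1}"
    unfolding bounded_iff using sublevel_bounded by (intro exI[of _ B]) simp
  moreover have exp: "diag_matrix a \<in> Exps P" using hom by (simp add: Exps_def)
  ultimately show "pos_homogeneous P"
    unfolding pos_homogeneous_def using cont nonneg P0 by (auto simp: compact_eq_bounded_closed)
  have "trace E = sum a UNIV" if "E \<in> Exps P" for E
    using trace_eq_if_homogeneous[OF P0 r sublevel_bounded hom] that by (simp add: Exps_def)
  then show "hom_order P = sum a UNIV"
    unfolding hom_order_def by (rule someI2[of "\<lambda>E. E \<in> Exps P", OF exp])
qed

section \<open>Dominated convergence for unordered sums\<close>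

lemma summable_on_dominated:
  fixes f M :: "'i \<Rightarrow> real"
  assumes "M summable_on S" "\<And>b. b \<in> S \<Longrightarrow> \<bar>f b\<bar> \<le> M b"
  shows "f summable_on S"
proof -
  have "(\<lambda>b. norm (f b)) summable_on S"
    by (rule summable_on_comparison_test[OF assms(1)]) (use assms(2) in auto)
  then show ?thesis by (rule abs_summable_summable)
qed

lemma abs_infsum_le_dominating:
  fixes f M :: "'i \<Rightarrow> real"
  assumes "M summable_on S" "\<And>b. b \<in> S \<Longrightarrow> \<bar>f b\<bar> \<le> M b"
  shows "\<bar>infsum f S\<bar> \<le> infsum M S"
proof -
  have abs: "(\<lambda>b. \<bar>f b\<bar>) summable_on S"
    by (rule summable_on_dominated[OF assms(1)]) (use assms(2) in simp)
  have "\<bar>infsum f S\<bar> \<le> infsum (\<lambda>b. \<bar>f b\<bar>) S"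
    using norm_infsum_bound[of f S] abs by (simp add: summable_on_iff_abs_summable_on_real[symmetric])
  also have "\<dots> \<le> infsum M S"
    by (rule infsum_mono) (use abs assms in auto)
  finally show ?thesis .
qed

lemma infsum_split_finite:
  fixes f :: "'i \<Rightarrow> real"
  assumes "f summable_on S" "finite F" "F \<subseteq> S"
  shows "infsum f S = sum f F + infsum f (S - F)"
proof -
  have "infsum f S = infsum f (F \<union> (S - F))" using assms by (simp add: Un_absorb1)
  also have "\<dots> = infsum f F + infsum f (S - F)"
    by (rule infsum_Un_disjoint) (use assms in \<open>auto intro: summable_on_subset_banach\<close>)
  finally show ?thesis using assms by simp
qed

lemma tendsto_infsum_dominated:
  fixes f :: "'x \<Rightarrow> 'i \<Rightarrow> real" and g M :: "'i \<Rightarrow> real"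
  assumes lim: "\<And>b. b \<in> S \<Longrightarrow> ((\<lambda>x. f x b) \<longlongrightarrow> g b) F"
    and bound: "\<forall>\<^sub>F x in F. \<forall>b\<in>S. \<bar>f x b\<bar> \<le> M b"
    and g_bound: "\<And>b. b \<in> S \<Longrightarrow> \<bar>g b\<bar> \<le> M b"
    and M: "M summable_on S"
  shows "((\<lambda>x. infsum (f x) S) \<longlongrightarrow> infsum g S) F"
proof (rule tendstoI)
  fix e :: real assume e: "e > 0"
  obtain F0 where F0: "finite F0" "F0 \<subseteq> S" "dist (sum M F0) (infsum M S) \<le> e / 4"
    using infsum_finite_approximation[OF M, of "e / 4"] e by auto
  have tail: "infsum M (S - F0) \<le> e / 4"
    using infsum_split_finite[OF M F0(1,2)] F0(3) by (simp add: dist_real_def)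
  have M_tail: "M summable_on (S - F0)" using M by (rule summable_on_subset_banach) auto
  have "((\<lambda>x. \<Sum>b\<in>F0. f x b) \<longlongrightarrow> (\<Sum>b\<in>F0. g b)) F"
    using F0 lim by (intro tendsto_sum) auto
  then have head: "\<forall>\<^sub>F x in F. dist (\<Sum>b\<in>F0. f x b) (\<Sum>b\<in>F0. g b) < e / 4"
    using e by (intro tendstoD) auto
  show "\<forall>\<^sub>F x in F. dist (infsum (f x) S) (infsum g S) < e"
    using head bound
  proof eventually_elim
    case (elim x)
    have fs: "f x summable_on S" by (rule summable_on_dominated[OF M]) (use elim in auto)
    have gs: "g summable_on S" by (rule summable_on_dominated[OF M g_bound])
    have "\<bar>infsum (f x) (S - F0)\<bar> \<le> infsum M (S - F0)"
      by (rule abs_infsum_le_dominating[OF M_tail]) (use elim in auto)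
    moreover have "\<bar>infsum g (S - F0)\<bar> \<le> infsum M (S - F0)"
      by (rule abs_infsum_le_dominating[OF M_tail]) (use g_bound in auto)
    moreover have "infsum (f x) S - infsum g S
        = ((\<Sum>b\<in>F0. f x b) - (\<Sum>b\<in>F0. g b)) + (infsum (f x) (S - F0) - infsum g (S - F0))"
      using infsum_split_finite[OF fs F0(1,2)] infsum_split_finite[OF gs F0(1,2)] by simp
    moreover have "\<bar>(\<Sum>b\<in>F0. f x b) - (\<Sum>b\<in>F0. g b)\<bar> < e / 4"
      using elim(1) by (simp add: dist_real_def)
    ultimately show ?case
      using tail unfolding dist_real_def abs_le_iff abs_less_iff by linarith
  qed
qed

lemma continuous_on_infsum_dominated:
  fixes f :: "'a::topological_space \<Rightarrow> 'i \<Rightarrow> real" and M :: "'i \<Rightarrow> real"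
  assumes cont: "\<And>b. b \<in> S \<Longrightarrow> continuous_on T (\<lambda>x. f x b)"
    and bound: "\<And>x b. x \<in> T \<Longrightarrow> b \<in> S \<Longrightarrow> \<bar>f x b\<bar> \<le> M b"
    and M: "M summable_on S"
  shows "continuous_on T (\<lambda>x. infsum (f x) S)"
  unfolding continuous_on_def
proof
  fix x assume x: "x \<in> T"
  show "((\<lambda>x. infsum (f x) S) \<longlongrightarrow> infsum (f x) S) (at x within T)"
  proof (rule tendsto_infsum_dominated[OF _ _ _ M])
    show "\<forall>\<^sub>F y in at x within T. \<forall>b\<in>S. \<bar>f y b\<bar> \<le> M b"
      using bound by (auto simp: eventually_at_filter)
  qed (use cont x bound in \<open>auto simp: continuous_on_def\<close>)
qed

text \<open>The mean value inequality bounds the difference quotients of the terms by the dominating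
  function, so dominated convergence applies to them.\<close>

lemma has_real_derivative_infsum_dominated:
  fixes f f' :: "'i \<Rightarrow> real \<Rightarrow> real" and M :: "'i \<Rightarrow> real"
  assumes x: "a < x" "x < b"
    and deriv: "\<And>i s. i \<in> S \<Longrightarrow> a < s \<Longrightarrow> s < b \<Longrightarrow> (f i has_real_derivative f' i s) (at s)"
    and bound: "\<And>i s. i \<in> S \<Longrightarrow> a < s \<Longrightarrow> s < b \<Longrightarrow> \<bar>f' i s\<bar> \<le> M i"
    and M: "M summable_on S"
    and summable: "\<And>s. a < s \<Longrightarrow> s < b \<Longrightarrow> (\<lambda>i. f i s) summable_on S"
  shows "((\<lambda>s. infsum (\<lambda>i. f i s) S) has_real_derivative infsum (\<lambda>i. f' i x) S) (at x)"
proof -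
  define q where "q y i = (f i y - f i x) / (y - x)" for y i
  have near: "\<forall>\<^sub>F y in at x. a < y \<and> y < b \<and> y \<noteq> x"
  proof -
    have "\<forall>\<^sub>F y in nhds x. y \<in> {a<..<b}" using x by (intro eventually_nhds_in_open) auto
    then show ?thesis unfolding eventually_at_filter by eventually_elim auto
  qed
  have q_bound: "\<forall>\<^sub>F y in at x. \<forall>i\<in>S. \<bar>q y i\<bar> \<le> M i"
    using near
  proof eventually_elim
    case (elim y)
    show ?case
    proof
      fix i assume i: "i \<in> S"
      have "norm (f i y - f i x) \<le> M i * norm (y - x)"
        using elim x deriv[OF i] bound[OF i]
        by (intro field_differentiable_bound[of "{a<..<b}"]) (auto intro: has_field_derivative_at_within)
      then show "\<bar>q y i\<bar> \<le> M i" using elim by (simp add: q_def abs_divide divide_le_eq)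
    qed
  qed
  have "((\<lambda>y. infsum (q y) S) \<longlongrightarrow> infsum (\<lambda>i. f' i x) S) (at x)"
  proof (rule tendsto_infsum_dominated[OF _ q_bound _ M])
    fix i assume "i \<in> S"
    then show "((\<lambda>y. q y i) \<longlongrightarrow> f' i x) (at x)"
      using deriv x unfolding q_def has_field_derivative_iff by simp
    show "\<bar>f' i x\<bar> \<le> M i" using bound[OF \<open>i \<in> S\<close> x] .
  qed
  moreover have "\<forall>\<^sub>F y in at x. infsum (q y) S
      = (infsum (\<lambda>i. f i y) S - infsum (\<lambda>i. f i x) S) / (y - x)"
    using near
  proof eventually_elim
    case (elim y)
    have "infsum (q y) S = infsum (\<lambda>i. f i y + - f i x) S / (y - x)"
      unfolding q_def by (simp add: infsum_cmult_left' divide_inverse)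
    also have "\<dots> = (infsum (\<lambda>i. f i y) S - infsum (\<lambda>i. f i x) S) / (y - x)"
      using summable elim x by (subst infsum_add) (auto simp: summable_on_uminus infsum_uminus)
    finally show ?case .
  qed
  ultimately show ?thesis
    unfolding has_field_derivative_iff using tendsto_cong by fastforce
qed

section \<open>Power series in several variables\<close>

lemma pow_le_two_pow: "real n ^ L \<le> real L ^ L * 2 ^ n"
proof (cases "0 < L \<and> L \<le> n")
  case True
  then have "real n ^ L = real L ^ L * (real n / real L) ^ L" by (simp add: power_divide)
  also have "\<dots> \<le> real L ^ L * real (n choose L)"
    using True by (intro mult_left_mono binomial_ge_n_over_k_pow_k) auto
  also have "\<dots> \<le> real L ^ L * 2 ^ n"
    using binomial_le_pow2[of n L] by (intro mult_left_mono) (simp_all flip: of_nat_le_iff)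
  finally show ?thesis .
next
  case False
  then have "real n ^ L \<le> real L ^ L" by (cases "L = 0") (auto intro: power_mono)
  also have "\<dots> \<le> real L ^ L * 2 ^ n" using mult_left_mono[of 1 "2 ^ n" "real L ^ L"] by simp
  finally show ?thesis .
qed

lemma affine_pow_le_two_pow:
  assumes "A \<ge> 0" "B \<ge> 0"
  shows "(A * real n + B) ^ L \<le> 2 * ((A + B) * real L) ^ L * 2 ^ n"
proof -
  have "(A * real n + B) ^ L \<le> ((A + B) * real (Suc n)) ^ L"
    using assms by (intro power_mono) (auto simp: algebra_simps)
  also have "\<dots> \<le> (A + B) ^ L * (real L ^ L * 2 ^ Suc n)"
    unfolding power_mult_distrib using assms by (intro mult_left_mono pow_le_two_pow) auto
  finally show ?thesis by (simp add: power_mult_distrib mult_ac)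
qed

definition total_deg :: "('n::finite \<Rightarrow> nat) \<Rightarrow> nat" where
  "total_deg \<beta> = sum \<beta> UNIV"

lemma xmon_abs_le:
  assumes "\<And>j. \<bar>\<xi> $ j\<bar> \<le> v $ j"
  shows "\<bar>xmon \<xi> \<beta>\<bar> \<le> xmon v \<beta>"
  unfolding xmon_def abs_prod
  by (intro prod_mono) (use assms in \<open>auto intro: power_mono simp: power_abs\<close>)

lemma xmon_const: "xmon (\<chi> i. r) \<beta> = r ^ total_deg \<beta>"
  by (simp add: xmon_def total_deg_def power_sum)

lemma xmon_le_box: "(\<And>j. \<bar>\<xi> $ j\<bar> \<le> r) \<Longrightarrow> \<bar>xmon \<xi> \<beta>\<bar> \<le> r ^ total_deg \<beta>"
  using xmon_abs_le[of \<xi> "\<chi> i. r" \<beta>] by (simp add: xmon_const)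

lemma xmon_axis_deriv:
  "((\<lambda>s. xmon (x + s *\<^sub>R axis j 1) \<gamma>) has_real_derivative
     real (\<gamma> j) * xmon (x + s *\<^sub>R axis j 1) (\<gamma>(j := \<gamma> j - 1))) (at s)"
proof -
  define C where "C = (\<Prod>i\<in>UNIV - {j}. (x $ i) ^ \<gamma> i)"
  have split: "xmon (x + s *\<^sub>R axis j 1) \<gamma>' = (x $ j + s) ^ \<gamma>' j * C"
    if "\<And>i. i \<noteq> j \<Longrightarrow> \<gamma>' i = \<gamma> i" for \<gamma>' s
  proof -
    have "(\<Prod>i\<in>UNIV - {j}. ((x + s *\<^sub>R axis j 1) $ i) ^ \<gamma>' i) = C"
      unfolding C_def using that by (intro prod.cong) (auto simp: axis_def)
    then show ?thesis
      unfolding xmon_def by (subst prod.remove[of UNIV j]) (auto simp: axis_def)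
  qed
  have "((\<lambda>s. (x $ j + s) ^ \<gamma> j * C) has_real_derivative
       real (\<gamma> j) * ((x $ j + s) ^ (\<gamma> j - 1) * C)) (at s)"
    by (auto intro!: derivative_eq_intros)
  then show ?thesis by (simp add: split)
qed

text \<open>Differentiating \<open>\<xi>\<^sup>\<beta>\<close> along the directions in \<open>js\<close> (the last one first) gives
  \<open>pd_coeff js \<beta> * \<xi> ^ pd_index js \<beta>\<close>. The truncated subtraction in \<open>pd_index\<close> is harmless:
  once an exponent would become negative, the coefficient is already zero.\<close>

primrec pd_index :: "'n list \<Rightarrow> ('n \<Rightarrow> nat) \<Rightarrow> ('n \<Rightarrow> nat)" where
  "pd_index [] \<beta> = \<beta>"
| "pd_index (j # js) \<beta> = (pd_index js \<beta>)(j := pd_index js \<beta> j - 1)"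

primrec pd_coeff :: "'n list \<Rightarrow> ('n \<Rightarrow> nat) \<Rightarrow> real" where
  "pd_coeff [] \<beta> = 1"
| "pd_coeff (j # js) \<beta> = pd_coeff js \<beta> * real (pd_index js \<beta> j)"

lemma total_deg_fun_upd:
  "total_deg (\<gamma>(j := n)) + \<gamma> j = total_deg \<gamma> + (n::nat)"
  unfolding total_deg_def
  by (simp add: sum.remove[of UNIV j] sum.cong[of "UNIV - {j}" _ "\<gamma>(j := n)" \<gamma>])

lemma total_deg_pd_index_Cons:
  "total_deg (pd_index (j # js) \<beta>) + pd_index js \<beta> j = total_deg (pd_index js \<beta>) + (pd_index js \<beta> j - 1)"
  unfolding pd_index.simps by (rule total_deg_fun_upd)

lemma total_deg_pd_index_le: "total_deg (pd_index js \<beta>) \<le> total_deg \<beta>"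
proof (induction js)
  case (Cons j js)
  then show ?case using total_deg_pd_index_Cons[of j js \<beta>] by linarith
qed simp

lemma total_deg_pd_index:
  "pd_coeff js \<beta> \<noteq> 0 \<Longrightarrow> total_deg (pd_index js \<beta>) + length js = total_deg \<beta>"
proof (induction js)
  case (Cons j js)
  then have "pd_coeff js \<beta> \<noteq> 0" and j: "pd_index js \<beta> j \<noteq> 0" by auto
  from Cons.IH[OF this(1)] have "total_deg (pd_index js \<beta>) + length js = total_deg \<beta>" .
  with j show ?case using total_deg_pd_index_Cons[of j js \<beta>] by (simp only: length_Cons)
qed simp

lemma pd_coeff_bounds: "0 \<le> pd_coeff js \<beta> \<and> pd_coeff js \<beta> \<le> real (total_deg \<beta>) ^ length js"
proof (induction js)
  case (Cons j js)
  have "pd_index js \<beta> j \<le> total_deg (pd_index js \<beta>)"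
    unfolding total_deg_def by (rule member_le_sum) auto
  then have "pd_index js \<beta> j \<le> total_deg \<beta>"
    using total_deg_pd_index_le order_trans by blast
  then have "pd_coeff js \<beta> * real (pd_index js \<beta> j) \<le> real (total_deg \<beta>) ^ length js * real (total_deg \<beta>)"
    using Cons by (intro mult_mono) auto
  then show ?case using Cons by (simp add: mult.commute)
qed simp

lemma exists_radius_of_summable_near0:
  fixes c :: "('n::finite \<Rightarrow> nat) \<Rightarrow> real"
  assumes "open U" "0 \<in> U"
    and summable: "\<And>\<xi>. \<xi> \<in> U \<Longrightarrow> (\<lambda>\<beta>. norm (c \<beta> * xmon \<xi> \<beta>)) summable_on S"
  obtains \<delta> where "\<delta> > 0" "(\<lambda>\<beta>. \<bar>c \<beta>\<bar> * \<delta> ^ total_deg \<beta>) summable_on S"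
proof -
  obtain e where e: "e > 0" "ball 0 e \<subseteq> U" using assms open_contains_ball by blast
  define \<delta> where "\<delta> = e / (real CARD('n) + 1)"
  have \<delta>: "\<delta> > 0" using e by (simp add: \<delta>_def add_pos_nonneg)
  have "norm (\<chi> i::'n. \<delta>) \<le> (\<Sum>i\<in>UNIV. \<bar>(\<chi> i::'n. \<delta>) $ i\<bar>)" by (rule norm_le_l1_cart)
  also have "\<dots> < e" using e \<delta> by (simp add: \<delta>_def field_simps)
  finally have "(\<lambda>\<beta>. norm (c \<beta> * xmon (\<chi> i. \<delta>) \<beta>)) summable_on S"
    using e by (intro summable) auto
  then show thesis using \<delta> by (intro that[of \<delta>]) (simp_all add: xmon_const abs_mult)
qed

locale abs_convergent_power_series =
  fixes c :: "('n::finite \<Rightarrow> nat) \<Rightarrow> real" and S :: "('n \<Rightarrow> nat) set" and \<delta> :: real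
  assumes radius_pos: "\<delta> > 0"
    and abs_summable: "(\<lambda>\<beta>. \<bar>c \<beta>\<bar> * \<delta> ^ total_deg \<beta>) summable_on S"
begin

lemma summable_const_times: "(\<lambda>\<beta>. K * (\<bar>c \<beta>\<bar> * \<delta> ^ total_deg \<beta>)) summable_on S"
  using abs_summable by (rule summable_on_cmult_right)

definition pd_term :: "'n list \<Rightarrow> real^'n \<Rightarrow> ('n \<Rightarrow> nat) \<Rightarrow> real" where
  "pd_term js \<xi> \<beta> = c \<beta> * pd_coeff js \<beta> * xmon \<xi> (pd_index js \<beta>)"

text \<open>On the box of half the radius, the factor \<open>2 ^ - total_deg \<beta>\<close> absorbs the polynomial growth
  of \<open>pd_coeff\<close>.\<close>

lemma pd_term_bound:
  obtains K where "K \<ge> 0"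
    "\<And>\<beta> \<xi>. (\<And>j. \<bar>\<xi> $ j\<bar> \<le> \<delta> / 2) \<Longrightarrow> \<bar>pd_term js \<xi> \<beta>\<bar> \<le> K * (\<bar>c \<beta>\<bar> * \<delta> ^ total_deg \<beta>)"
proof
  define L where "L = length js"
  define K where "K = 2 * real L ^ L / (\<delta> / 2) ^ L"
  show "K \<ge> 0" using radius_pos by (simp add: K_def)
  fix \<beta> and \<xi> :: "real^'n" assume box: "\<And>j. \<bar>\<xi> $ j\<bar> \<le> \<delta> / 2"
  show "\<bar>pd_term js \<xi> \<beta>\<bar> \<le> K * (\<bar>c \<beta>\<bar> * \<delta> ^ total_deg \<beta>)"
  proof (cases "pd_coeff js \<beta> = 0")
    case False
    have deg: "total_deg (pd_index js \<beta>) + L = total_deg \<beta>"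
      using total_deg_pd_index[OF False] by (simp add: L_def)
    have "\<bar>pd_term js \<xi> \<beta>\<bar> \<le> \<bar>c \<beta>\<bar> * real (total_deg \<beta>) ^ L * (\<delta> / 2) ^ total_deg (pd_index js \<beta>)"
      unfolding pd_term_def abs_mult using pd_coeff_bounds[of js \<beta>] xmon_le_box[OF box]
      by (intro mult_mono) (auto simp: L_def)
    also have "\<dots> \<le> \<bar>c \<beta>\<bar> * (2 * real L ^ L * 2 ^ total_deg \<beta>) * (\<delta> / 2) ^ total_deg (pd_index js \<beta>)"
      using radius_pos affine_pow_le_two_pow[of 1 0 "total_deg \<beta>" L] by (intro mult_mono) auto
    also have "\<dots> = K * (\<bar>c \<beta>\<bar> * \<delta> ^ total_deg \<beta>)"
      using radius_pos unfolding K_def deg[symmetric]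
      by (simp add: power_add power_divide field_simps)
    finally show ?thesis .
  qed (use \<open>K \<ge> 0\<close> radius_pos in \<open>simp add: pd_term_def\<close>)
qed

definition half_box :: "(real^'n) set" where
  "half_box = {\<xi>. \<forall>j. \<bar>\<xi> $ j\<bar> < \<delta> / 2}"

lemma open_half_box: "open half_box"
proof -
  have "half_box = (\<Inter>j. {\<xi>::real^'n. \<bar>\<xi> $ j\<bar> < \<delta> / 2})" by (auto simp: half_box_def)
  moreover have "open {\<xi>::real^'n. \<bar>\<xi> $ j\<bar> < \<delta> / 2}" for j
    by (intro open_Collect_less continuous_intros)
  ultimately show ?thesis by (auto intro: open_INT)
qed

lemma zero_in_half_box: "0 \<in> half_box"
  using radius_pos by (simp add: half_box_def)

lemma half_box_axis_nhds:
  assumes "\<xi> \<in> half_box"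
  obtains \<eta> where "\<eta> > 0" "\<And>s. \<bar>s\<bar> < \<eta> \<Longrightarrow> \<xi> + s *\<^sub>R axis j 1 \<in> half_box"
proof
  show "\<delta> / 2 - \<bar>\<xi> $ j\<bar> > 0" using assms by (simp add: half_box_def)
  fix s :: real assume "\<bar>s\<bar> < \<delta> / 2 - \<bar>\<xi> $ j\<bar>"
  then have "\<bar>\<xi> $ j + s\<bar> < \<delta> / 2" using abs_triangle_ineq[of "\<xi> $ j" s] by linarith
  then show "\<xi> + s *\<^sub>R axis j 1 \<in> half_box" using assms by (auto simp: half_box_def axis_def)
qed

lemma summable_pd_term:
  assumes "\<xi> \<in> half_box"
  shows "pd_term js \<xi> summable_on S"
proof -
  obtain K where K: "\<And>\<beta> \<xi>. (\<And>j. \<bar>\<xi> $ j\<bar> \<le> \<delta> / 2) \<Longrightarrow>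
      \<bar>pd_term js \<xi> \<beta>\<bar> \<le> K * (\<bar>c \<beta>\<bar> * \<delta> ^ total_deg \<beta>)"
    using pd_term_bound[of js] by blast
  have "\<bar>\<xi> $ j\<bar> \<le> \<delta> / 2" for j using assms by (simp add: half_box_def less_imp_le)
  then show ?thesis by (intro summable_on_dominated[OF summable_const_times[of K]] K)
qed

lemma pd_term_has_derivative:
  assumes "\<xi> \<in> half_box"
  shows "((\<lambda>s. infsum (pd_term js (\<xi> + s *\<^sub>R axis j 1)) S)
    has_real_derivative infsum (pd_term (j # js) \<xi>) S) (at 0)"
proof -
  obtain \<eta> where \<eta>: "\<eta> > 0" "\<And>s. \<bar>s\<bar> < \<eta> \<Longrightarrow> \<xi> + s *\<^sub>R axis j 1 \<in> half_box"
    using half_box_axis_nhds[OF assms] by blast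
  obtain K where K: "K \<ge> 0" "\<And>\<beta> \<xi>. (\<And>j. \<bar>\<xi> $ j\<bar> \<le> \<delta> / 2) \<Longrightarrow>
      \<bar>pd_term (j # js) \<xi> \<beta>\<bar> \<le> K * (\<bar>c \<beta>\<bar> * \<delta> ^ total_deg \<beta>)"
    using pd_term_bound[of "j # js"] by blast
  have "((\<lambda>s. infsum (\<lambda>\<beta>. pd_term js (\<xi> + s *\<^sub>R axis j 1) \<beta>) S) has_real_derivative
      infsum (\<lambda>\<beta>. pd_term (j # js) (\<xi> + 0 *\<^sub>R axis j 1) \<beta>) S) (at 0)"
  proof (rule has_real_derivative_infsum_dominated[OF _ _ _ _ summable_const_times])
    fix \<beta> and s :: real assume s: "- \<eta> < s" "s < \<eta>"
    show "((\<lambda>s. pd_term js (\<xi> + s *\<^sub>R axis j 1) \<beta>) has_real_derivative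
        pd_term (j # js) (\<xi> + s *\<^sub>R axis j 1) \<beta>) (at s)"
    proof -
      have "((\<lambda>s. (c \<beta> * pd_coeff js \<beta>) * xmon (\<xi> + s *\<^sub>R axis j 1) (pd_index js \<beta>))
          has_real_derivative (c \<beta> * pd_coeff js \<beta>) * (real (pd_index js \<beta> j) *
            xmon (\<xi> + s *\<^sub>R axis j 1) ((pd_index js \<beta>)(j := pd_index js \<beta> j - 1)))) (at s)"
        by (intro DERIV_cmult xmon_axis_deriv)
      then show ?thesis by (simp add: pd_term_def mult_ac)
    qed
    show "\<bar>pd_term (j # js) (\<xi> + s *\<^sub>R axis j 1) \<beta>\<bar> \<le> K * (\<bar>c \<beta>\<bar> * \<delta> ^ total_deg \<beta>)"
      using \<eta>(2)[of s] s by (intro K(2)) (auto simp: half_box_def less_imp_le)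
    show "(\<lambda>\<beta>. pd_term js (\<xi> + s *\<^sub>R axis j 1) \<beta>) summable_on S"
      using \<eta>(2)[of s] s by (intro summable_pd_term) auto
  qed (use \<eta> in auto)
  then show ?thesis by simp
qed

lemma continuous_on_pd_sum: "continuous_on half_box (\<lambda>\<xi>. infsum (pd_term js \<xi>) S)"
proof -
  obtain K where K: "K \<ge> 0" "\<And>\<beta> \<xi>. (\<And>j. \<bar>\<xi> $ j\<bar> \<le> \<delta> / 2) \<Longrightarrow>
      \<bar>pd_term js \<xi> \<beta>\<bar> \<le> K * (\<bar>c \<beta>\<bar> * \<delta> ^ total_deg \<beta>)"
    using pd_term_bound[of js] by blast
  show ?thesis
  proof (rule continuous_on_infsum_dominated[OF _ _ summable_const_times])
    fix \<beta> show "continuous_on half_box (\<lambda>\<xi>. pd_term js \<xi> \<beta>)"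
      unfolding pd_term_def xmon_def by (intro continuous_intros)
  next
    fix \<xi> \<beta> assume "\<xi> \<in> half_box"
    then show "\<bar>pd_term js \<xi> \<beta>\<bar> \<le> K * (\<bar>c \<beta>\<bar> * \<delta> ^ total_deg \<beta>)"
      by (intro K(2)) (auto simp: half_box_def less_imp_le)
  qed
qed

lemma has_derivative_along_axis_if_eq_pd_sum:
  assumes G: "\<And>x. x \<in> half_box \<Longrightarrow> G x = infsum (pd_term js x) S" and "\<xi> \<in> half_box"
  shows "((\<lambda>s. G (\<xi> + s *\<^sub>R axis j 1)) has_real_derivative infsum (pd_term (j # js) \<xi>) S) (at 0)"
proof -
  obtain \<eta> where \<eta>: "\<eta> > 0" "\<And>s. \<bar>s\<bar> < \<eta> \<Longrightarrow> \<xi> + s *\<^sub>R axis j 1 \<in> half_box"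
    using half_box_axis_nhds[OF \<open>\<xi> \<in> half_box\<close>] by blast
  have "\<forall>\<^sub>F s in nhds 0. s \<in> ball 0 \<eta>" using \<eta>(1) by (intro eventually_nhds_in_open) auto
  then have "\<forall>\<^sub>F s in nhds 0. G (\<xi> + s *\<^sub>R axis j 1) = infsum (pd_term js (\<xi> + s *\<^sub>R axis j 1)) S"
    by eventually_elim (auto intro: G \<eta>(2))
  from DERIV_cong_ev[OF refl this refl] pd_term_has_derivative[OF \<open>\<xi> \<in> half_box\<close>]
  show ?thesis by simp
qed

lemma ipderiv_series:
  "\<xi> \<in> half_box \<Longrightarrow> ipderiv js (\<lambda>\<xi>. \<Sum>\<^sub>\<infinity>\<beta>\<in>S. c \<beta> * xmon \<xi> \<beta>) \<xi> = infsum (pd_term js \<xi>) S"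
proof (induction js arbitrary: \<xi>)
  case (Cons j js)
  have "((\<lambda>s. ipderiv js (\<lambda>\<xi>. \<Sum>\<^sub>\<infinity>\<beta>\<in>S. c \<beta> * xmon \<xi> \<beta>) (\<xi> + s *\<^sub>R axis j 1))
      has_real_derivative infsum (pd_term (j # js) \<xi>) S) (at 0)"
    by (rule has_derivative_along_axis_if_eq_pd_sum[OF Cons.IH Cons.prems])
  then show ?case by (simp add: pderiv_dir_def DERIV_imp_deriv)
qed (simp add: pd_term_def[abs_def])

lemma smooth_near0_series: "smooth_near0 (\<lambda>\<xi>. \<Sum>\<^sub>\<infinity>\<beta>\<in>S. c \<beta> * xmon \<xi> \<beta>)"
  unfolding smooth_near0_def C_k_on_def
proof (intro exI[of _ half_box] conjI allI impI ballI open_half_box zero_in_half_box)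
  fix js j and x :: "real^'n" assume "x \<in> half_box"
  then show "(\<lambda>s. ipderiv js (\<lambda>\<xi>. \<Sum>\<^sub>\<infinity>\<beta>\<in>S. c \<beta> * xmon \<xi> \<beta>) (x + s *\<^sub>R axis j 1)) differentiable (at 0)"
    using has_derivative_along_axis_if_eq_pd_sum[OF ipderiv_series]
    unfolding real_differentiable_def by blast
next
  fix js
  show "continuous_on half_box (ipderiv js (\<lambda>\<xi>. \<Sum>\<^sub>\<infinity>\<beta>\<in>S. c \<beta> * xmon \<xi> \<beta>))"
    by (rule continuous_on_eq[OF continuous_on_pd_sum]) (simp add: ipderiv_series)
qed

end

section \<open>Subhomogeneity of power series with a weighted degree gap\<close>

lemma subhomogeneous_if_strongly_subhomogeneous:
  "strongly_subhomogeneous E l P \<Longrightarrow> subhomogeneous E P"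
  unfolding strongly_subhomogeneous_def subhomogeneous_def by fastforce

lemma contracting_diag_matrix:
  assumes "\<And>i. a i > 0"
  shows "contracting (diag_matrix a)"
  unfolding contracting_def
proof (rule tendsto_sandwich[of "\<lambda>_. 0" _ _ "\<lambda>t. \<Sum>i\<in>UNIV. t powr a i"])
  show "\<forall>\<^sub>F t in at_right 0. norm (tpow t (diag_matrix a)) \<le> (\<Sum>i\<in>UNIV. t powr a i)"
    using eventually_at_right_less[of "0::real"]
  proof eventually_elim
    case (elim t)
    then show ?case
      using norm_le_entry_norm[of "tpow t (diag_matrix a)"]
      by (simp add: tpow_diag_matrix entry_norm_diag_matrix)
  qed
  have "((\<lambda>t. \<Sum>i\<in>UNIV. t powr a i) \<longlongrightarrow> (\<Sum>i\<in>(UNIV::'a set). 0)) (at_right 0)"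
    using assms by (intro tendsto_sum tendsto_zero_powrI tendsto_ident_at)
      (auto intro: eventually_mono[OF eventually_at_right_less])
  then show "((\<lambda>t. \<Sum>i\<in>UNIV. t powr a i) \<longlongrightarrow> 0) (at_right 0)" by simp
qed auto

lemma xmon_diag_scale:
  assumes "t > 0"
  shows "xmon (\<chi> i. t powr a i * \<xi> $ i) \<beta> = t powr (\<Sum>j\<in>UNIV. real (\<beta> j) * a j) * xmon \<xi> \<beta>"
proof -
  have "xmon (\<chi> i. t powr a i * \<xi> $ i) \<beta> = (\<Prod>j\<in>UNIV. t powr (real (\<beta> j) * a j) * (\<xi> $ j) ^ \<beta> j)"
    unfolding xmon_def using assms by (simp add: power_mult_distrib powr_power)
  also have "\<dots> = t powr (\<Sum>j\<in>UNIV. real (\<beta> j) * a j) * xmon \<xi> \<beta>"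
    using assms by (simp add: prod.distrib xmon_def powr_sum)
  finally show ?thesis .
qed

lemma exists_scale_into_box:
  fixes R \<rho> :: real
  assumes "R \<ge> 0" "\<rho> > 0" "\<And>i. a i > 0"
  obtains \<tau> where "\<tau> > 0"
    "\<And>s (\<xi>::real^'n) i. 0 < s \<Longrightarrow> s \<le> \<tau> \<Longrightarrow> \<bar>\<xi> $ i\<bar> \<le> R \<Longrightarrow> \<bar>s powr a i * \<xi> $ i\<bar> \<le> \<rho>"
proof
  define q where "q i = (\<rho> / (R + 1)) powr (1 / a i)" for i :: 'n
  show "Min (range q) > 0" using assms by (subst Min_gr_iff) (auto simp: q_def)
  fix s and \<xi> :: "real^'n" and i assume s: "0 < s" "s \<le> Min (range q)" and \<xi>: "\<bar>\<xi> $ i\<bar> \<le> R"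
  have "s powr a i \<le> q i powr a i"
    using s Min_le[of "range q" "q i"] assms(3)[of i] by (intro powr_mono2) auto
  also have "\<dots> = \<rho> / (R + 1)" using assms(1,2) assms(3)[of i] by (simp add: q_def powr_powr)
  finally have "\<bar>s powr a i * \<xi> $ i\<bar> \<le> \<rho> / (R + 1) * R"
    unfolding abs_mult using \<xi> assms(1,2) by (intro mult_mono) auto
  also have "\<dots> \<le> \<rho>" using assms by (simp add: field_simps)
  finally show "\<bar>s powr a i * \<xi> $ i\<bar> \<le> \<rho>" .
qed

lemma compact_imp_bounded_components:
  fixes K :: "(real^'n) set"
  assumes "compact K"
  obtains R where "R \<ge> 0" "\<And>\<xi> i. \<xi> \<in> K \<Longrightarrow> \<bar>\<xi> $ i\<bar> \<le> R"
proof -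
  obtain R0 where R0: "\<And>\<xi>. \<xi> \<in> K \<Longrightarrow> norm \<xi> \<le> R0"
    using compact_imp_bounded[OF assms] unfolding bounded_iff by blast
  have "\<bar>\<xi> $ i\<bar> \<le> max R0 0" if "\<xi> \<in> K" for \<xi> i
    using component_le_norm_cart[of \<xi> i] R0[OF that] by linarith
  then show thesis by (intro that[of "max R0 0"]) auto
qed

definition falling_fact :: "real \<Rightarrow> nat \<Rightarrow> real" where
  "falling_fact w k = (\<Prod>i<k. w - real i)"

lemma falling_fact_Suc: "falling_fact w (Suc k) = falling_fact w k * (w - real k)"
  by (simp add: falling_fact_def)

lemma abs_falling_fact_le: "w \<ge> 0 \<Longrightarrow> \<bar>falling_fact w k\<bar> \<le> (w + real k) ^ k"
  unfolding falling_fact_def abs_prod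
  using prod_mono[of "{..<k}" "\<lambda>i. \<bar>w - real i\<bar>" "\<lambda>_. w + real k"] by simp

locale weighted_tail_series = abs_convergent_power_series c S \<delta>
  for c :: "('n::finite \<Rightarrow> nat) \<Rightarrow> real" and S \<delta> +
  fixes a :: "'n \<Rightarrow> real" and \<gamma> :: real
  assumes weights_pos: "\<And>j. a j > 0" and gap_pos: "\<gamma> > 0"
    and weight_gap: "\<And>\<beta>. \<beta> \<in> S \<Longrightarrow> (\<Sum>j\<in>UNIV. real (\<beta> j) * a j) \<ge> 1 + \<gamma>"
begin

definition weight :: "('n \<Rightarrow> nat) \<Rightarrow> real" where
  "weight \<beta> = (\<Sum>j\<in>UNIV. real (\<beta> j) * a j)"

lemma weight_nonneg: "weight \<beta> \<ge> 0"
  unfolding weight_def using weights_pos by (intro sum_nonneg mult_nonneg_nonneg) (auto intro: less_imp_le)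

lemma weight_le: "weight \<beta> \<le> sum a UNIV * real (total_deg \<beta>)"
proof -
  have "weight \<beta> \<le> (\<Sum>j\<in>UNIV. real (\<beta> j) * sum a UNIV)"
    unfolding weight_def using weights_pos
    by (intro sum_mono mult_left_mono member_le_sum) (auto intro: less_imp_le)
  moreover have "(\<Sum>j\<in>UNIV. real (\<beta> j) * A) = A * real (total_deg \<beta>)" for A
    unfolding total_deg_def of_nat_sum sum_distrib_right[symmetric] by (simp add: mult.commute)
  ultimately show ?thesis by simp
qed

lemma falling_fact_weight_bound:
  obtains C where "C \<ge> 0"
    "\<And>\<beta>. \<bar>falling_fact (weight \<beta>) k\<bar> * (\<delta> / 2) ^ total_deg \<beta> \<le> C * \<delta> ^ total_deg \<beta>"
proof
  let ?A = "sum a UNIV"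
  have A: "?A \<ge> 0" using weights_pos by (intro sum_nonneg) (auto intro: less_imp_le)
  show "2 * ((?A + real k) * real k) ^ k \<ge> 0" using A by simp
  fix \<beta>
  have "\<bar>falling_fact (weight \<beta>) k\<bar> \<le> (?A * real (total_deg \<beta>) + real k) ^ k"
    using abs_falling_fact_le[OF weight_nonneg] weight_le[of \<beta>] weight_nonneg[of \<beta>]
    by (meson add_le_cancel_right order_trans power_mono add_nonneg_nonneg of_nat_0_le_iff)
  also have "\<dots> \<le> 2 * ((?A + real k) * real k) ^ k * 2 ^ total_deg \<beta>"
    using A by (intro affine_pow_le_two_pow) auto
  finally show "\<bar>falling_fact (weight \<beta>) k\<bar> * (\<delta> / 2) ^ total_deg \<beta>
      \<le> 2 * ((?A + real k) * real k) ^ k * \<delta> ^ total_deg \<beta>"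
    using radius_pos by (auto dest: mult_right_mono[of _ _ "(\<delta> / 2) ^ total_deg \<beta>"] simp: power_divide)
qed

text \<open>Since \<open>(s\<^sup>E \<xi>)\<^sup>\<beta> = s powr weight \<beta> * \<xi>\<^sup>\<beta>\<close> for \<open>E = diag_matrix a\<close>, this is the termwise
  \<open>k\<close>-th derivative of \<open>s \<mapsto> F (s\<^sup>E \<xi>)\<close>.\<close>

definition radial_deriv :: "real^'n \<Rightarrow> nat \<Rightarrow> real \<Rightarrow> real" where
  "radial_deriv \<xi> k s =
    (\<Sum>\<^sub>\<infinity>\<beta>\<in>S. c \<beta> * falling_fact (weight \<beta>) k * s powr (weight \<beta> - real k) * xmon \<xi> \<beta>)"

lemma power_times_radial_deriv:
  assumes "t > 0"
  shows "t ^ k * radial_deriv \<xi> k t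
    = (\<Sum>\<^sub>\<infinity>\<beta>\<in>S. c \<beta> * falling_fact (weight \<beta>) k * xmon (\<chi> i. t powr a i * \<xi> $ i) \<beta>)"
  unfolding radial_deriv_def infsum_cmult_right'[symmetric]
proof (rule infsum_cong)
  fix \<beta>
  have "t ^ k * t powr (weight \<beta> - real k) = t powr weight \<beta>"
    using assms by (simp add: powr_realpow[symmetric] powr_add[symmetric])
  moreover have "xmon (\<chi> i. t powr a i * \<xi> $ i) \<beta> = t powr weight \<beta> * xmon \<xi> \<beta>"
    unfolding weight_def by (rule xmon_diag_scale[OF assms])
  ultimately show "t ^ k * (c \<beta> * falling_fact (weight \<beta>) k * t powr (weight \<beta> - real k) * xmon \<xi> \<beta>)
      = c \<beta> * falling_fact (weight \<beta>) k * xmon (\<chi> i. t powr a i * \<xi> $ i) \<beta>"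
    by (metis mult.assoc mult.left_commute)
qed

context
  fixes R \<tau> :: real
  assumes \<tau>_pos: "\<tau> > 0"
    and scale_into_box: "\<And>s (\<xi>::real^'n) i. 0 < s \<Longrightarrow> s \<le> \<tau> \<Longrightarrow> \<bar>\<xi> $ i\<bar> \<le> R \<Longrightarrow>
      \<bar>s powr a i * \<xi> $ i\<bar> \<le> \<delta> / 2"
begin

lemma radial_term_bound:
  assumes "r0 > 0"
  obtains C where "C \<ge> 0" "\<And>\<beta> \<xi> r. (\<And>i. \<bar>\<xi> $ i\<bar> \<le> R) \<Longrightarrow> r0 \<le> r \<Longrightarrow> r \<le> \<tau> \<Longrightarrow>
    \<bar>c \<beta> * falling_fact (weight \<beta>) k * r powr (weight \<beta> - real k) * xmon \<xi> \<beta>\<bar>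
      \<le> C * (\<bar>c \<beta>\<bar> * \<delta> ^ total_deg \<beta>)"
proof -
  obtain C where C: "C \<ge> 0"
    "\<And>\<beta>. \<bar>falling_fact (weight \<beta>) k\<bar> * (\<delta> / 2) ^ total_deg \<beta> \<le> C * \<delta> ^ total_deg \<beta>"
    using falling_fact_weight_bound[where k = k] by blast
  show thesis
  proof (rule that[of "r0 powr (- real k) * C"])
    show "0 \<le> r0 powr (- real k) * C" using C by simp
    fix \<beta> and \<xi> :: "real^'n" and r assume \<xi>: "\<And>i. \<bar>\<xi> $ i\<bar> \<le> R" and r: "r0 \<le> r" "r \<le> \<tau>"
    have r_pos: "r > 0" using r assms by linarith
    let ?y = "\<chi> i. r powr a i * \<xi> $ i"
    have "xmon ?y \<beta> = r powr weight \<beta> * xmon \<xi> \<beta>"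
      unfolding weight_def using r_pos by (rule xmon_diag_scale)
    then have "r powr (weight \<beta> - real k) * xmon \<xi> \<beta> = r powr (- real k) * xmon ?y \<beta>"
      by (simp add: powr_diff powr_minus divide_inverse mult_ac)
    then have "\<bar>c \<beta> * falling_fact (weight \<beta>) k * r powr (weight \<beta> - real k) * xmon \<xi> \<beta>\<bar>
        = \<bar>c \<beta>\<bar> * \<bar>falling_fact (weight \<beta>) k\<bar> * (r powr (- real k) * \<bar>xmon ?y \<beta>\<bar>)"
      by (simp only: mult.assoc) (simp add: abs_mult)
    also have "\<dots> \<le> \<bar>c \<beta>\<bar> * \<bar>falling_fact (weight \<beta>) k\<bar> * (r0 powr (- real k) * (\<delta> / 2) ^ total_deg \<beta>)"
      using r assms r_pos \<xi> scale_into_box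
      by (intro mult_left_mono mult_mono powr_mono2' xmon_le_box) auto
    also have "\<dots> = r0 powr (- real k) * \<bar>c \<beta>\<bar> * (\<bar>falling_fact (weight \<beta>) k\<bar> * (\<delta> / 2) ^ total_deg \<beta>)"
      by (simp add: mult_ac)
    also have "\<dots> \<le> r0 powr (- real k) * \<bar>c \<beta>\<bar> * (C * \<delta> ^ total_deg \<beta>)"
      by (intro mult_left_mono C(2)) auto
    finally show "\<bar>c \<beta> * falling_fact (weight \<beta>) k * r powr (weight \<beta> - real k) * xmon \<xi> \<beta>\<bar>
        \<le> r0 powr (- real k) * C * (\<bar>c \<beta>\<bar> * \<delta> ^ total_deg \<beta>)"
      by (simp add: mult_ac)
  qed
qed


lemma radial_deriv_has_derivative:
  assumes \<xi>: "\<And>i. \<bar>\<xi> $ i\<bar> \<le> R" and s: "0 < s" "s < \<tau>"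
  shows "(radial_deriv \<xi> k has_real_derivative radial_deriv \<xi> (Suc k) s) (at s)"
proof -
  have "s / 2 > 0" using s by simp
  obtain C1 where C1: "\<And>\<beta> r. s / 2 \<le> r \<Longrightarrow> r \<le> \<tau> \<Longrightarrow>
      \<bar>c \<beta> * falling_fact (weight \<beta>) (Suc k) * r powr (weight \<beta> - real (Suc k)) * xmon \<xi> \<beta>\<bar>
        \<le> C1 * (\<bar>c \<beta>\<bar> * \<delta> ^ total_deg \<beta>)"
    using radial_term_bound[OF \<open>s / 2 > 0\<close>, where k = "Suc k"] \<xi> by metis
  obtain C0 where C0: "\<And>\<beta> r. s / 2 \<le> r \<Longrightarrow> r \<le> \<tau> \<Longrightarrow>
      \<bar>c \<beta> * falling_fact (weight \<beta>) k * r powr (weight \<beta> - real k) * xmon \<xi> \<beta>\<bar>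
        \<le> C0 * (\<bar>c \<beta>\<bar> * \<delta> ^ total_deg \<beta>)"
    using radial_term_bound[OF \<open>s / 2 > 0\<close>, where k = k] \<xi> by metis
  show ?thesis
    unfolding radial_deriv_def[abs_def]
  proof (rule has_real_derivative_infsum_dominated[where a = "s / 2" and b = "(s + \<tau>) / 2"])
    fix \<beta> r assume r: "s / 2 < r" "r < (s + \<tau>) / 2"
    then have "r > 0" using s by simp
    have "((\<lambda>r. (c \<beta> * falling_fact (weight \<beta>) k) * r powr (weight \<beta> - real k) * xmon \<xi> \<beta>)
        has_real_derivative (c \<beta> * falling_fact (weight \<beta>) k) *
          ((weight \<beta> - real k) * r powr (weight \<beta> - real k - 1)) * xmon \<xi> \<beta>) (at r)"
      by (intro DERIV_cmult_right DERIV_cmult has_real_derivative_powr \<open>r > 0\<close>)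
    then show "((\<lambda>r. c \<beta> * falling_fact (weight \<beta>) k * r powr (weight \<beta> - real k) * xmon \<xi> \<beta>)
        has_real_derivative
          c \<beta> * falling_fact (weight \<beta>) (Suc k) * r powr (weight \<beta> - real (Suc k)) * xmon \<xi> \<beta>) (at r)"
      by (simp add: falling_fact_Suc algebra_simps)
    show "\<bar>c \<beta> * falling_fact (weight \<beta>) (Suc k) * r powr (weight \<beta> - real (Suc k)) * xmon \<xi> \<beta>\<bar>
        \<le> C1 * (\<bar>c \<beta>\<bar> * \<delta> ^ total_deg \<beta>)"
      using r s by (intro C1) auto
    show "(\<lambda>\<beta>. c \<beta> * falling_fact (weight \<beta>) k * r powr (weight \<beta> - real k) * xmon \<xi> \<beta>) summable_on S"
      using r s by (intro summable_on_dominated[OF summable_const_times[of C0]] C0) auto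
  qed (use s summable_const_times in auto)
qed

lemma deriv_iter_eq_radial_deriv:
  assumes \<xi>: "\<And>i. \<bar>\<xi> $ i\<bar> \<le> R"
  shows "0 < s \<Longrightarrow> s < \<tau> \<Longrightarrow>
    (deriv ^^ k) (\<lambda>s. \<Sum>\<^sub>\<infinity>\<beta>\<in>S. c \<beta> * xmon (tpow s (diag_matrix a) *v \<xi>) \<beta>) s = radial_deriv \<xi> k s"
proof (induction k arbitrary: s)
  case 0
  have "xmon (tpow s (diag_matrix a) *v \<xi>) \<beta> = s powr weight \<beta> * xmon \<xi> \<beta>" for \<beta>
    unfolding weight_def tpow_diag_matrix_mulv[OF 0(1)] by (rule xmon_diag_scale[OF 0(1)])
  then show ?case by (simp add: radial_deriv_def falling_fact_def mult_ac)
next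
  case (Suc k)
  have "\<forall>\<^sub>F r in nhds s. r \<in> {0<..<\<tau>}" using Suc.prems by (intro eventually_nhds_in_open) auto
  then have "\<forall>\<^sub>F r in nhds s. (deriv ^^ k)
      (\<lambda>s. \<Sum>\<^sub>\<infinity>\<beta>\<in>S. c \<beta> * xmon (tpow s (diag_matrix a) *v \<xi>) \<beta>) r = radial_deriv \<xi> k r"
    by eventually_elim (use Suc.IH in auto)
  from DERIV_cong_ev[OF refl this refl] radial_deriv_has_derivative[OF \<xi> Suc.prems]
  show ?case by (simp add: DERIV_imp_deriv)
qed

lemma xmon_scaled_le_gap:
  assumes \<xi>: "\<And>i. \<bar>\<xi> $ i\<bar> \<le> R" and t: "0 < t" "t \<le> \<tau>" and "\<beta> \<in> S"
  shows "\<bar>xmon (\<chi> i. t powr a i * \<xi> $ i) \<beta>\<bar> \<le> (t / \<tau>) powr (1 + \<gamma>) * (\<delta> / 2) ^ total_deg \<beta>"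
proof -
  define u where "u = t / \<tau>"
  have u: "0 < u" "u \<le> 1" using t \<tau>_pos by (auto simp: u_def)
  have "\<bar>t powr a i * \<xi> $ i\<bar> \<le> u powr a i * (\<delta> / 2)" for i
  proof -
    have "\<bar>t powr a i * \<xi> $ i\<bar> = u powr a i * \<bar>\<tau> powr a i * \<xi> $ i\<bar>"
      using t \<tau>_pos by (simp add: u_def powr_divide abs_mult)
    also have "\<dots> \<le> u powr a i * (\<delta> / 2)"
      using scale_into_box[OF \<tau>_pos order_refl \<xi>] by (intro mult_left_mono) auto
    finally show ?thesis .
  qed
  then have "\<bar>xmon (\<chi> i. t powr a i * \<xi> $ i) \<beta>\<bar> \<le> xmon (\<chi> i. u powr a i * (\<chi> i. \<delta> / 2) $ i) \<beta>"
    by (intro xmon_abs_le) simp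
  also have "\<dots> = u powr weight \<beta> * (\<delta> / 2) ^ total_deg \<beta>"
    unfolding weight_def xmon_diag_scale[OF u(1)] xmon_const ..
  also have "\<dots> \<le> u powr (1 + \<gamma>) * (\<delta> / 2) ^ total_deg \<beta>"
    using weight_gap[OF \<open>\<beta> \<in> S\<close>] u radius_pos by (intro mult_right_mono powr_mono') (auto simp: weight_def)
  finally show ?thesis by (simp add: u_def)
qed

lemma radial_deriv_bound:
  obtains C where "C \<ge> 0" "\<And>\<xi> t. (\<And>i. \<bar>\<xi> $ i\<bar> \<le> R) \<Longrightarrow> 0 < t \<Longrightarrow> t \<le> \<tau> \<Longrightarrow>
    \<bar>t ^ k * radial_deriv \<xi> k t\<bar> \<le> C * (t / \<tau>) powr (1 + \<gamma>)"
proof -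
  obtain Ck where Ck: "Ck \<ge> 0"
    "\<And>\<beta>. \<bar>falling_fact (weight \<beta>) k\<bar> * (\<delta> / 2) ^ total_deg \<beta> \<le> Ck * \<delta> ^ total_deg \<beta>"
    using falling_fact_weight_bound[where k = k] by blast
  define C where "C = Ck * infsum (\<lambda>\<beta>. \<bar>c \<beta>\<bar> * \<delta> ^ total_deg \<beta>) S"
  show thesis
  proof (rule that[of C])
    show "C \<ge> 0" unfolding C_def using Ck(1) radius_pos by (intro mult_nonneg_nonneg infsum_nonneg) auto
    fix \<xi> :: "real^'n" and t assume \<xi>: "\<And>i. \<bar>\<xi> $ i\<bar> \<le> R" and t: "0 < t" "t \<le> \<tau>"
    let ?u = "(t / \<tau>) powr (1 + \<gamma>)"
    have "\<bar>t ^ k * radial_deriv \<xi> k t\<bar>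
        \<le> (\<Sum>\<^sub>\<infinity>\<beta>\<in>S. ?u * Ck * (\<bar>c \<beta>\<bar> * \<delta> ^ total_deg \<beta>))"
      unfolding power_times_radial_deriv[OF t(1)]
    proof (rule abs_infsum_le_dominating[OF summable_const_times])
      fix \<beta> assume "\<beta> \<in> S"
      have "\<bar>c \<beta> * falling_fact (weight \<beta>) k * xmon (\<chi> i. t powr a i * \<xi> $ i) \<beta>\<bar>
          \<le> \<bar>c \<beta>\<bar> * \<bar>falling_fact (weight \<beta>) k\<bar> * (?u * (\<delta> / 2) ^ total_deg \<beta>)"
        unfolding abs_mult using xmon_scaled_le_gap[OF \<xi> t \<open>\<beta> \<in> S\<close>] by (intro mult_left_mono) auto
      also have "\<dots> = ?u * \<bar>c \<beta>\<bar> * (\<bar>falling_fact (weight \<beta>) k\<bar> * (\<delta> / 2) ^ total_deg \<beta>)"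
        by (simp add: mult_ac)
      also have "\<dots> \<le> ?u * \<bar>c \<beta>\<bar> * (Ck * \<delta> ^ total_deg \<beta>)"
        by (intro mult_left_mono Ck(2)) auto
      finally show "\<bar>c \<beta> * falling_fact (weight \<beta>) k * xmon (\<chi> i. t powr a i * \<xi> $ i) \<beta>\<bar>
          \<le> ?u * Ck * (\<bar>c \<beta>\<bar> * \<delta> ^ total_deg \<beta>)"
        by (simp add: mult_ac)
    qed
    also have "\<dots> = C * ?u"
      by (simp only: infsum_cmult_right') (simp add: C_def mult_ac)
    finally show "\<bar>t ^ k * radial_deriv \<xi> k t\<bar> \<le> C * ?u" .
  qed
qed

text \<open>By the previous bound, \<open>\<bar>t ^ k * d\<^sup>k/ds\<^sup>k F (s\<^sup>E \<xi>) at t\<bar>\<close> is \<open>O(t ^ (1 + \<gamma>))\<close>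
  uniformly on the box, and \<open>t ^ \<gamma> \<rightarrow> 0\<close>.\<close>

lemma eventually_deriv_iter_le:
  assumes "\<epsilon> > 0"
  shows "\<forall>\<^sub>F t in at_right 0. \<forall>\<xi>. (\<forall>i. \<bar>\<xi> $ i\<bar> \<le> R) \<longrightarrow>
    \<bar>t ^ k * (deriv ^^ k) (\<lambda>s. \<Sum>\<^sub>\<infinity>\<beta>\<in>S. c \<beta> * xmon (tpow s (diag_matrix a) *v \<xi>) \<beta>) t\<bar> \<le> \<epsilon> * t"
proof -
  obtain C where C: "\<And>\<xi> t. (\<And>i. \<bar>\<xi> $ i\<bar> \<le> R) \<Longrightarrow> 0 < t \<Longrightarrow> t \<le> \<tau> \<Longrightarrow>
      \<bar>t ^ k * radial_deriv \<xi> k t\<bar> \<le> C * (t / \<tau>) powr (1 + \<gamma>)"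
    using radial_deriv_bound[where k = k] by blast
  have "((\<lambda>t. C / \<tau> powr (1 + \<gamma>) * t powr \<gamma>) \<longlongrightarrow> C / \<tau> powr (1 + \<gamma>) * 0) (at_right 0)"
    using gap_pos by (intro tendsto_mult tendsto_const tendsto_zero_powrI tendsto_ident_at)
      (auto intro: eventually_mono[OF eventually_at_right_less])
  then have "\<forall>\<^sub>F t in at_right 0. C / \<tau> powr (1 + \<gamma>) * t powr \<gamma> < \<epsilon>"
    using assms by (intro order_tendstoD) auto
  moreover have "\<forall>\<^sub>F t in at_right 0. 0 < t \<and> t < \<tau>"
    using \<tau>_pos by (auto simp: eventually_at_right_field)
  ultimately show ?thesis
  proof eventually_elim
    case (elim t)
    show ?case
    proof (intro allI impI)
      fix \<xi> :: "real^'n" assume "\<forall>i. \<bar>\<xi> $ i\<bar> \<le> R"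
      then have \<xi>: "\<And>i. \<bar>\<xi> $ i\<bar> \<le> R" by blast
      have "\<bar>t ^ k * (deriv ^^ k) (\<lambda>s. \<Sum>\<^sub>\<infinity>\<beta>\<in>S. c \<beta> * xmon (tpow s (diag_matrix a) *v \<xi>) \<beta>) t\<bar>
          = \<bar>t ^ k * radial_deriv \<xi> k t\<bar>"
        using elim by (simp add: deriv_iter_eq_radial_deriv[OF \<xi>])
      also have "\<dots> \<le> C * (t / \<tau>) powr (1 + \<gamma>)" using elim by (intro C \<xi>) auto
      also have "\<dots> = t * (C / \<tau> powr (1 + \<gamma>) * t powr \<gamma>)"
        using elim \<tau>_pos by (simp add: powr_divide powr_add field_simps)
      also have "\<dots> \<le> t * \<epsilon>" using elim by (intro mult_left_mono) auto
      finally show "\<bar>t ^ k * (deriv ^^ k)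
          (\<lambda>s. \<Sum>\<^sub>\<infinity>\<beta>\<in>S. c \<beta> * xmon (tpow s (diag_matrix a) *v \<xi>) \<beta>) t\<bar> \<le> \<epsilon> * t"
        by (simp add: mult.commute)
    qed
  qed
qed

end

lemma strongly_subhomogeneous_series:
  "strongly_subhomogeneous (diag_matrix a) l (\<lambda>\<xi>. \<Sum>\<^sub>\<infinity>\<beta>\<in>S. c \<beta> * xmon \<xi> \<beta>)"
  unfolding strongly_subhomogeneous_def
proof (intro conjI allI impI)
  show "contracting (diag_matrix a)" by (rule contracting_diag_matrix[OF weights_pos])
  show "C_k_near0 l (\<lambda>\<xi>. \<Sum>\<^sub>\<infinity>\<beta>\<in>S. c \<beta> * xmon \<xi> \<beta>)"
    using smooth_near0_series by (auto simp: smooth_near0_def C_k_near0_def)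
  fix \<epsilon> :: real and K :: "(real^'n) set" assume \<epsilon>: "\<epsilon> > 0" and K: "compact K"
  obtain R where R: "R \<ge> 0" "\<And>\<xi> i. \<xi> \<in> K \<Longrightarrow> \<bar>\<xi> $ i\<bar> \<le> R"
    using compact_imp_bounded_components[OF K] by blast
  obtain \<tau> where \<tau>: "\<tau> > 0"
    "\<And>s (\<xi>::real^'n) i. 0 < s \<Longrightarrow> s \<le> \<tau> \<Longrightarrow> \<bar>\<xi> $ i\<bar> \<le> R \<Longrightarrow> \<bar>s powr a i * \<xi> $ i\<bar> \<le> \<delta> / 2"
    using exists_scale_into_box[where a = a and \<rho> = "\<delta> / 2", OF R(1) _ weights_pos] radius_pos by auto
  have "\<forall>\<^sub>F t in at_right 0. \<forall>\<xi>\<in>K.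
      \<bar>t ^ k * (deriv ^^ k) (\<lambda>s. \<Sum>\<^sub>\<infinity>\<beta>\<in>S. c \<beta> * xmon (tpow s (diag_matrix a) *v \<xi>) \<beta>) t\<bar> \<le> \<epsilon> * t"
    for k
  proof -
    have "\<forall>\<^sub>F t in at_right 0. \<forall>\<xi>. (\<forall>i. \<bar>\<xi> $ i\<bar> \<le> R) \<longrightarrow> \<bar>t ^ k *
        (deriv ^^ k) (\<lambda>s. \<Sum>\<^sub>\<infinity>\<beta>\<in>S. c \<beta> * xmon (tpow s (diag_matrix a) *v \<xi>) \<beta>) t\<bar> \<le> \<epsilon> * t"
      by (rule eventually_deriv_iter_le[where R = R and \<tau> = \<tau>]) (use \<tau> \<epsilon> in auto)
    then show ?thesis by eventually_elim (use R(2) in blast)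
  qed
  then have "\<forall>\<^sub>F t in at_right 0. \<forall>k\<in>{..l}. \<forall>\<xi>\<in>K.
      \<bar>t ^ k * (deriv ^^ k) (\<lambda>s. \<Sum>\<^sub>\<infinity>\<beta>\<in>S. c \<beta> * xmon (tpow s (diag_matrix a) *v \<xi>) \<beta>) t\<bar> \<le> \<epsilon> * t"
    by (intro eventually_ball_finite) auto
  then show "\<exists>\<tau>>0. \<forall>t. 0 < t \<and> t < \<tau> \<longrightarrow> (\<forall>\<xi>\<in>K. \<forall>k\<le>l.
      \<bar>t ^ k * (deriv ^^ k) (\<lambda>s. \<Sum>\<^sub>\<infinity>\<beta>\<in>S. c \<beta> * xmon (tpow s (diag_matrix a) *v \<xi>) \<beta>) t\<bar> \<le> \<epsilon> * t)"
    unfolding eventually_at_right_field by fastforce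
qed

end

section \<open>Weighted degrees\<close>

lemma wdeg_times_prod_nat:
  assumes "\<And>j. n j > 0"
  shows "\<exists>N::nat. real (\<Prod>j\<in>UNIV. n j) * wdeg \<beta> n = real N"
proof -
  have "real (\<Prod>i\<in>UNIV. n i) * (real (\<beta> j) / real (n j)) = real (\<beta> j * (\<Prod>i\<in>UNIV - {j}. n i))" for j
    using assms[of j] by (simp add: prod.remove[of UNIV j] del: of_nat_prod)
  then have "real (\<Prod>j\<in>UNIV. n j) * wdeg \<beta> n = real (\<Sum>j\<in>UNIV. \<beta> j * (\<Prod>i\<in>UNIV - {j}. n i))"
    unfolding wdeg_def sum_distrib_left of_nat_sum by simp
  then show ?thesis by blast
qed

text \<open>The weighted degrees lie in the lattice \<open>(1 / \<Prod>j. n j) \<nat>\<close>, so above any threshold there is a gap.\<close>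

lemma wdeg_gap:
  assumes "\<And>j. n j > 0"
  obtains \<gamma> where "\<gamma> > 0" "\<And>\<beta>. wdeg \<beta> n > \<theta> \<Longrightarrow> wdeg \<beta> n \<ge> \<theta> + \<gamma>"
proof
  define D where "D = real (\<Prod>j\<in>UNIV. n j)"
  have D: "D > 0" using assms by (simp add: D_def prod_pos)
  show "(real_of_int (\<lfloor>D * \<theta>\<rfloor> + 1)) / D - \<theta> > 0"
    using D by (simp add: field_simps) linarith
  fix \<beta> assume "wdeg \<beta> n > \<theta>"
  obtain N :: nat where N: "D * wdeg \<beta> n = real N"
    using wdeg_times_prod_nat[where n = n, OF assms] by (auto simp: D_def)
  have "D * \<theta> < real N" using \<open>wdeg \<beta> n > \<theta>\<close> D N by (metis mult_less_cancel_left_pos)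
  then have "\<lfloor>D * \<theta>\<rfloor> < int N" by (simp add: floor_less_iff)
  then have "real_of_int (\<lfloor>D * \<theta>\<rfloor> + 1) \<le> D * wdeg \<beta> n" unfolding N by linarith
  then show "\<theta> + (real_of_int (\<lfloor>D * \<theta>\<rfloor> + 1) / D - \<theta>) \<le> wdeg \<beta> n"
    using D by (simp add: divide_le_eq mult.commute)
qed

lemma finite_wdeg_eq:
  assumes "\<And>j. n j > 0"
  shows "finite {\<beta>. wdeg \<beta> n = \<theta>}"
proof -
  define N where "N = nat \<lceil>real (\<Sum>j\<in>UNIV. n j) * \<theta>\<rceil>"
  have "\<beta> j \<le> N" if "wdeg \<beta> n = \<theta>" for \<beta> j
  proof -
    have "real (\<beta> j) / real (n j) \<le> \<theta>"
      unfolding that[symmetric] wdeg_def by (rule member_le_sum) auto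
    then have "real (\<beta> j) \<le> real (n j) * \<theta>" using assms[of j] by (simp add: divide_le_eq mult.commute)
    also have "\<dots> \<le> real (\<Sum>j\<in>UNIV. n j) * \<theta>"
      using \<open>real (\<beta> j) / real (n j) \<le> \<theta>\<close> by (intro mult_right_mono) (auto intro: member_le_sum order_trans[rotated])
    finally show ?thesis unfolding N_def by linarith
  qed
  then have "{\<beta>. wdeg \<beta> n = \<theta>} \<subseteq> Pi\<^sub>E UNIV (\<lambda>_. {..N})" by auto
  then show ?thesis by (rule finite_subset) (simp add: finite_PiE)
qed

lemma poly_no_lin_weighted:
  assumes n: "\<And>j. n j \<ge> 2" and "\<theta> \<ge> 1"
  shows "poly_no_lin (\<lambda>\<xi>. \<Sum>\<beta>\<in>{\<beta>. wdeg \<beta> n = \<theta>}. C \<beta> * xmon \<xi> \<beta>)"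
  unfolding poly_no_lin_def
proof (intro exI[of _ "{\<beta>. wdeg \<beta> n = \<theta>}"] exI[of _ C] conjI ballI allI refl)
  have "n j > 0" for j using n[of j] by linarith
  then show "finite {\<beta>. wdeg \<beta> n = \<theta>}" by (rule finite_wdeg_eq)
  fix \<beta> assume "\<beta> \<in> {\<beta>. wdeg \<beta> n = \<theta>}"
  have "real (\<beta> j) / real (n j) \<le> real (\<beta> j) / 2" for j
    using n[of j] by (intro divide_left_mono) auto
  then have "wdeg \<beta> n \<le> (\<Sum>j\<in>UNIV. real (\<beta> j) / 2)"
    unfolding wdeg_def by (rule sum_mono)
  then have "2 \<le> real (\<Sum>j\<in>UNIV. \<beta> j)"
    using \<open>\<beta> \<in> _\<close> \<open>\<theta> \<ge> 1\<close> by (simp add: sum_divide_distrib[symmetric])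
  then show "2 \<le> (\<Sum>j\<in>UNIV. \<beta> j)" by (metis of_nat_le_iff of_nat_numeral)
qed

lemma weighted_tail_at_0:
  assumes "\<theta> \<ge> 0"
  shows "(\<Sum>\<^sub>\<infinity>\<beta>\<in>{\<beta>. wdeg \<beta> n > \<theta>}. C \<beta> * xmon 0 \<beta>) = 0"
proof (rule infsum_0)
  fix \<beta> assume "\<beta> \<in> {\<beta>. wdeg \<beta> n > \<theta>}"
  then have "\<beta> \<noteq> (\<lambda>_. 0)" using assms by (auto simp: wdeg_def)
  then obtain j where "\<beta> j \<noteq> 0" by auto
  then show "C \<beta> * xmon 0 \<beta> = 0" by (auto simp: xmon_def prod_zero_iff)
qed

lemma sum_weights_scaled:
  "(\<Sum>j\<in>UNIV. real (\<beta> j) * (1 / \<theta> * (1 / real (n j)))) = wdeg \<beta> n / \<theta>"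
  by (simp add: wdeg_def sum_divide_distrib mult.commute)

lemma homogeneous_weighted_poly:
  fixes n :: "'n::finite \<Rightarrow> nat"
  assumes "\<theta> > 0"
  shows "homogeneous_wrt ((1 / \<theta>) *\<^sub>R diag_matrix (\<lambda>j. 1 / real (n j)))
    (\<lambda>\<xi>. \<Sum>\<beta>\<in>{\<beta>. wdeg \<beta> n = \<theta>}. C \<beta> * xmon \<xi> \<beta>)"
  unfolding homogeneous_wrt_def scaleR_diag_matrix
proof (intro allI impI)
  fix t :: real and \<xi> :: "real^'n" assume t: "t > 0"
  have "xmon (tpow t (diag_matrix (\<lambda>j. 1 / \<theta> * (1 / real (n j)))) *v \<xi>) \<beta> = t * xmon \<xi> \<beta>"
    if "wdeg \<beta> n = \<theta>" for \<beta>
    using that assms t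
    by (simp only: tpow_diag_matrix_mulv[OF t] xmon_diag_scale[OF t] sum_weights_scaled) simp
  then show "(\<Sum>\<beta>\<in>{\<beta>. wdeg \<beta> n = \<theta>}. C \<beta> * xmon (tpow t (diag_matrix (\<lambda>j. 1 / \<theta> * (1 / real (n j)))) *v \<xi>) \<beta>)
      = t *\<^sub>R (\<Sum>\<beta>\<in>{\<beta>. wdeg \<beta> n = \<theta>}. C \<beta> * xmon \<xi> \<beta>)"
    by (simp add: sum_distrib_left mult.left_commute)
qed

lemma smooth_near0_if_summable_near0:
  assumes "open U" "0 \<in> U" "\<And>\<xi>. \<xi> \<in> U \<Longrightarrow> (\<lambda>\<beta>. norm (C \<beta> * xmon \<xi> \<beta>)) summable_on S"
  shows "smooth_near0 (\<lambda>\<xi>. \<Sum>\<^sub>\<infinity>\<beta>\<in>S. C \<beta> * xmon \<xi> \<beta>)"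
proof -
  obtain \<delta> where "\<delta> > 0" "(\<lambda>\<beta>. \<bar>C \<beta>\<bar> * \<delta> ^ total_deg \<beta>) summable_on S"
    by (rule exists_radius_of_summable_near0[OF assms])
  then interpret abs_convergent_power_series C S \<delta> by unfold_locales
  show ?thesis by (rule smooth_near0_series)
qed

lemma strongly_subhomogeneous_weighted_tail:
  fixes n :: "'n::finite \<Rightarrow> nat"
  assumes n: "\<And>j. n j > 0" and \<theta>: "\<theta> > 0"
    and U: "open U" "0 \<in> U"
    and summable: "\<And>\<xi>. \<xi> \<in> U \<Longrightarrow> (\<lambda>\<beta>. norm (C \<beta> * xmon \<xi> \<beta>)) summable_on {\<beta>. wdeg \<beta> n > \<theta>}"
  shows "strongly_subhomogeneous ((1 / \<theta>) *\<^sub>R diag_matrix (\<lambda>j. 1 / real (n j))) l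
    (\<lambda>\<xi>. \<Sum>\<^sub>\<infinity>\<beta>\<in>{\<beta>. wdeg \<beta> n > \<theta>}. C \<beta> * xmon \<xi> \<beta>)"
proof -
  obtain \<delta> where "\<delta> > 0" "(\<lambda>\<beta>. \<bar>C \<beta>\<bar> * \<delta> ^ total_deg \<beta>) summable_on {\<beta>. wdeg \<beta> n > \<theta>}"
    by (rule exists_radius_of_summable_near0[OF U summable])
  moreover obtain \<gamma> where \<gamma>: "\<gamma> > 0" "\<And>\<beta>. wdeg \<beta> n > \<theta> \<Longrightarrow> wdeg \<beta> n \<ge> \<theta> + \<gamma>"
    using wdeg_gap[where n = n, OF n] by blast
  ultimately interpret weighted_tail_series C "{\<beta>. wdeg \<beta> n > \<theta>}" \<delta>
    "\<lambda>j. 1 / \<theta> * (1 / real (n j))" "\<gamma> / \<theta>"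
  proof unfold_locales
    fix \<beta> assume "\<beta> \<in> {\<beta>. wdeg \<beta> n > \<theta>}"
    then have "\<theta> + \<gamma> \<le> wdeg \<beta> n" using \<gamma>(2) by simp
    have "1 + \<gamma> / \<theta> = (\<theta> + \<gamma>) / \<theta>" using \<theta> by (simp add: field_simps)
    also have "\<dots> \<le> wdeg \<beta> n / \<theta>" using \<open>\<theta> + \<gamma> \<le> wdeg \<beta> n\<close> \<theta> by (intro divide_right_mono) auto
    finally show "1 + \<gamma> / \<theta> \<le> (\<Sum>j\<in>UNIV. real (\<beta> j) * (1 / \<theta> * (1 / real (n j))))"
      unfolding sum_weights_scaled .
  qed (use n \<theta> \<gamma> in auto)
  show ?thesis
    unfolding scaleR_diag_matrix by (rule strongly_subhomogeneous_series)
qed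

lemma homogeneous_wrt_abs:
  fixes P :: "real^'n \<Rightarrow> real"
  shows "homogeneous_wrt E P \<Longrightarrow> homogeneous_wrt E (\<lambda>\<xi>. \<bar>P \<xi>\<bar>)"
  by (auto simp: homogeneous_wrt_def abs_mult)

lemma pos_homogeneous_of_scaled_diag:
  fixes P :: "real^'n \<Rightarrow> real" and n :: "'n \<Rightarrow> nat"
  assumes "continuous_on UNIV P" "\<And>\<xi>. P \<xi> \<ge> 0" "\<And>\<xi>. P \<xi> = 0 \<longleftrightarrow> \<xi> = 0"
    and "homogeneous_wrt E P" and E: "E = (1 / \<theta>) *\<^sub>R diag_matrix (\<lambda>j. 1 / real (n j))"
    and "\<theta> > 0" "\<And>j. n j > 0"
  shows "pos_homogeneous P" "hom_order P = (\<Sum>j\<in>UNIV. 1 / (\<theta> * real (n j)))"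
proof -
  have weights: "1 / \<theta> * (1 / real (n j)) > 0" for j using assms(6) assms(7)[of j] by simp
  note diag = assms(1-3) assms(4)[unfolded E scaleR_diag_matrix] weights
  show "pos_homogeneous P" by (rule pos_homogeneous_of_diag[OF diag])
  show "hom_order P = (\<Sum>j\<in>UNIV. 1 / (\<theta> * real (n j)))"
    using hom_order_of_diag[OF diag] by simp
qed

lemma weighted_part_and_tail:
  fixes n :: "'n::finite \<Rightarrow> nat"
  assumes n: "\<And>j. n j \<ge> 2" and \<theta>: "\<theta> \<ge> 1" and U: "open U" "0 \<in> U"
    and summable: "\<And>\<xi>. \<xi> \<in> U \<Longrightarrow> (\<lambda>\<beta>. norm (C \<beta> * xmon \<xi> \<beta>)) summable_on {\<beta>. wdeg \<beta> n > \<theta>}"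
    and P: "P = (\<lambda>\<xi>. \<Sum>\<beta>\<in>{\<beta>. wdeg \<beta> n = \<theta>}. C \<beta> * xmon \<xi> \<beta>)"
    and Pt: "Pt = (\<lambda>\<xi>. \<Sum>\<^sub>\<infinity>\<beta>\<in>{\<beta>. wdeg \<beta> n > \<theta>}. C \<beta> * xmon \<xi> \<beta>)"
    and E: "E = (1 / \<theta>) *\<^sub>R diag_matrix (\<lambda>j. 1 / real (n j))"
  shows "poly_no_lin P" "continuous_on UNIV P" "homogeneous_wrt E P"
    and "smooth_near0 Pt" "Pt 0 = 0" "strongly_subhomogeneous E l Pt"
proof -
  have n_pos: "n j > 0" for j using n[of j] by linarith
  show "poly_no_lin P" unfolding P using n \<theta> by (rule poly_no_lin_weighted)
  show "continuous_on UNIV P" unfolding P xmon_def by (intro continuous_intros)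
  show "homogeneous_wrt E P" unfolding P E using \<theta> by (intro homogeneous_weighted_poly) simp
  show "smooth_near0 Pt" unfolding Pt using U summable by (rule smooth_near0_if_summable_near0)
  show "Pt 0 = 0" unfolding Pt using \<theta> by (intro weighted_tail_at_0) simp
  show "strongly_subhomogeneous E l Pt"
    unfolding Pt E using n_pos \<theta> U summable by (intro strongly_subhomogeneous_weighted_tail) auto
qed

lemma pos_hom_typeI:
  assumes "Gamma_form \<phi> \<xi>0 \<alpha> Q Qt R Rt" "pos_homogeneous R"
    and "homogeneous_wrt E R" "homogeneous_wrt E Q"
    and "strongly_subhomogeneous E l Qt" "strongly_subhomogeneous E l' Rt"
  shows "pos_hom_type \<phi> \<xi>0 \<alpha> Q R"
proof -
  have "E \<in> Exps R" using assms(3) by (simp add: Exps_def)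
  moreover have "subhomogeneous E Qt" "subhomogeneous E Rt"
    using assms(5,6) by (auto intro: subhomogeneous_if_strongly_subhomogeneous)
  ultimately show ?thesis unfolding pos_hom_type_def using assms(1,2,4) by blast
qed

lemma imag_hom_typeI:
  assumes "Gamma_form \<phi> \<xi>0 \<alpha> Q Qt R Rt" "pos_homogeneous (\<lambda>\<xi>. \<bar>Q \<xi>\<bar>)" "pos_homogeneous R"
    and "homogeneous_wrt E Q" "k' > 1" "homogeneous_wrt ((1 / k') *\<^sub>R E) R"
    and "strongly_subhomogeneous E 2 Qt" "strongly_subhomogeneous ((1 / k') *\<^sub>R E) 1 Rt"
  shows "imag_hom_type \<phi> \<xi>0 \<alpha> Q R"
proof -
  have "E \<in> Exps (\<lambda>\<xi>. \<bar>Q \<xi>\<bar>)" using homogeneous_wrt_abs[OF assms(4)] by (simp add: Exps_def)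
  then show ?thesis unfolding imag_hom_type_def using assms(1-3,5-8) by blast
qed

theorem mainTheorem15:
  fixes \<phi> :: "int^'n \<Rightarrow> complex"
    and \<xi>0 \<alpha> :: "real^'n"
    and m :: "'n \<Rightarrow> nat"
    and k :: real
    and A B :: "('n \<Rightarrow> nat) \<Rightarrow> real"
    and Q Qt R Rt :: "real^'n \<Rightarrow> real"
  assumes phi_S: "Schwartz_d \<phi>"
    and sup1: "(SUP \<xi>. cmod (fhat \<phi> \<xi>)) = 1"
    and xi0: "\<xi>0 \<in> Omega \<phi>"
    and m_pos: "\<forall>j. m j > 0"
    and k_ge: "k \<ge> 1"
    and Q_def: "Q = (\<lambda>\<xi>. \<Sum>\<beta>\<in>{\<beta>. wdeg \<beta> (\<lambda>j. 2 * m j) = 1}. A \<beta> * xmon \<xi> \<beta>)"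
    and R_def: "R = (\<lambda>\<xi>. \<Sum>\<beta>\<in>{\<beta>. wdeg \<beta> (\<lambda>j. 2 * m j) = k}. B \<beta> * xmon \<xi> \<beta>)"
    and Qt_def: "Qt = (\<lambda>\<xi>. \<Sum>\<^sub>\<infinity>\<beta>\<in>{\<beta>. wdeg \<beta> (\<lambda>j. 2 * m j) > 1}. A \<beta> * xmon \<xi> \<beta>)"
    and Rt_def: "Rt = (\<lambda>\<xi>. \<Sum>\<^sub>\<infinity>\<beta>\<in>{\<beta>. wdeg \<beta> (\<lambda>j. 2 * m j) > k}. B \<beta> * xmon \<xi> \<beta>)"
    and R_posdef: "\<forall>\<xi>. R \<xi> \<ge> 0 \<and> (R \<xi> = 0 \<longleftrightarrow> \<xi> = 0)"
    and expansion: "\<exists>U. open U \<and> 0 \<in> U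
       \<and> (\<forall>\<xi>\<in>U. (\<lambda>\<beta>. norm (A \<beta> * xmon \<xi> \<beta>)) summable_on {\<beta>. wdeg \<beta> (\<lambda>j. 2 * m j) > 1})
       \<and> (\<forall>\<xi>\<in>U. (\<lambda>\<beta>. norm (B \<beta> * xmon \<xi> \<beta>)) summable_on {\<beta>. wdeg \<beta> (\<lambda>j. 2 * m j) > k})
       \<and> uniform_limit U (\<lambda>F \<xi>. \<Sum>\<beta>\<in>F. A \<beta> * xmon \<xi> \<beta>) Qt
           (finite_subsets_at_top {\<beta>. wdeg \<beta> (\<lambda>j. 2 * m j) > 1})
       \<and> uniform_limit U (\<lambda>F \<xi>. \<Sum>\<beta>\<in>F. B \<beta> * xmon \<xi> \<beta>) Rt
           (finite_subsets_at_top {\<beta>. wdeg \<beta> (\<lambda>j. 2 * m j) > k})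
       \<and> (\<forall>\<xi>\<in>U. Gamma_at \<phi> \<xi>0 \<xi> =
           \<i> * complex_of_real (\<alpha> \<bullet> \<xi>) - \<i> * complex_of_real (Q \<xi> + Qt \<xi>)
             - complex_of_real (R \<xi> + Rt \<xi>))"
  shows "(k = 1 \<longrightarrow> pos_hom_type \<phi> \<xi>0 \<alpha> Q R
            \<and> hom_order R = (\<Sum>j\<in>UNIV. 1 / (2 * real (m j))))
       \<and> (k > 1 \<and> (\<forall>\<xi>. \<bar>Q \<xi>\<bar> = 0 \<longleftrightarrow> \<xi> = 0) \<longrightarrow> imag_hom_type \<phi> \<xi>0 \<alpha> Q R
            \<and> hom_order (\<lambda>\<xi>. \<bar>Q \<xi>\<bar>) = (\<Sum>j\<in>UNIV. 1 / (2 * real (m j))))"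
proof -
  let ?n = "\<lambda>j. 2 * m j"
  let ?D = "diag_matrix (\<lambda>j. 1 / real (?n j))"
  have n: "\<And>j. ?n j \<ge> 2" and n_pos: "\<And>j. ?n j > 0" using m_pos by (auto simp: Suc_le_eq)
  from expansion obtain U where U: "open U" "0 \<in> U"
    and summable_A: "\<And>\<xi>. \<xi> \<in> U \<Longrightarrow> (\<lambda>\<beta>. norm (A \<beta> * xmon \<xi> \<beta>)) summable_on {\<beta>. wdeg \<beta> ?n > 1}"
    and summable_B: "\<And>\<xi>. \<xi> \<in> U \<Longrightarrow> (\<lambda>\<beta>. norm (B \<beta> * xmon \<xi> \<beta>)) summable_on {\<beta>. wdeg \<beta> ?n > k}"
    and Gamma: "\<forall>\<xi>\<in>U. Gamma_at \<phi> \<xi>0 \<xi> = \<i> * complex_of_real (\<alpha> \<bullet> \<xi>)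
        - \<i> * complex_of_real (Q \<xi> + Qt \<xi>) - complex_of_real (R \<xi> + Rt \<xi>)"
    by blast
  have D: "?D = (1 / 1) *\<^sub>R ?D" by simp
  note Q = weighted_part_and_tail[where n = ?n, OF n order_refl U summable_A Q_def Qt_def D]
  note R = weighted_part_and_tail[where n = ?n, OF n k_ge U summable_B R_def Rt_def refl]
  have Gamma_form: "Gamma_form \<phi> \<xi>0 \<alpha> Q Qt R Rt"
    unfolding Gamma_form_def using U Gamma Q(1,4,5) R(1,4,5) by blast
  have R_pos: "pos_homogeneous R" "hom_order R = (\<Sum>j\<in>UNIV. 1 / (k * real (?n j)))"
    using pos_homogeneous_of_scaled_diag[OF R(2) _ _ R(3) refl] R_posdef k_ge n_pos by auto
  show ?thesis
  proof (rule conjI; rule impI)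
    assume "k = 1"
    with R(3,6) have "homogeneous_wrt ?D R" "strongly_subhomogeneous ?D l Rt" for l by simp_all
    with \<open>k = 1\<close> R_pos show "pos_hom_type \<phi> \<xi>0 \<alpha> Q R \<and> hom_order R = (\<Sum>j\<in>UNIV. 1 / (2 * real (m j)))"
      using pos_hom_typeI[OF Gamma_form R_pos(1) _ Q(3) Q(6)] by simp
  next
    assume k_Q: "1 < k \<and> (\<forall>\<xi>. \<bar>Q \<xi>\<bar> = 0 \<longleftrightarrow> \<xi> = 0)"
    then have "\<And>\<xi>. \<bar>Q \<xi>\<bar> = 0 \<longleftrightarrow> \<xi> = 0" by blast
    note abs_Q = pos_homogeneous_of_scaled_diag[where n = ?n, OF continuous_on_rabs[OF Q(2)] abs_ge_zero
        this homogeneous_wrt_abs[OF Q(3)] D zero_less_one n_pos]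
    with k_Q show "imag_hom_type \<phi> \<xi>0 \<alpha> Q R \<and> hom_order (\<lambda>\<xi>. \<bar>Q \<xi>\<bar>) = (\<Sum>j\<in>UNIV. 1 / (2 * real (m j)))"
      using imag_hom_typeI[OF Gamma_form abs_Q(1) R_pos(1) Q(3) _ R(3) Q(6) R(6)] by simp
  qed
qed

end
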